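(* Let $h_{00},h_{11},h_{22},h_{33}>0$ and consider the system $\mathrm{(SL)}$ below with $g_{ii}(0)=h_{ii}$. Then the solution exists for all $t\ge0$ and, as $t\to\infty$: $g_{00}\to0$, $g_{11}\to0$, $g_{22}\to\infty$, $g_{33}\to\infty$, and $g_{33}-g_{22}\to 0$.
   Context: Let $\det h = h_{00}h_{11}h_{22}h_{33}$, $\beta = \frac{1}{6(\det h)^2}$, and $p(x,y,z) = x^4 - x^3(y+z) + x^2yz + x(-y^3+y^2z+yz^2-z^3) + y^4 - y^3z - yz^3 + z^4$, $q(x,y,z) = 5x^4 - 3x^3(y+z) + x^2yz + x(y^3-y^2z-yz^2+z^3) - 3y^4 + 3y^3z + 3yz^3 - 3z^4$. System (SL): $\dot g_{00} = -\beta\,p(-g_{11},g_{22},g_{33})\,g_{00}^3$, $\dot g_{11} = -\beta\,q(-g_{11},g_{22},g_{33})\,g_{00}^2g_{11}$, $\dot g_{22} = -\beta\,q(g_{22},-g_{11},g_{33})\,g_{00}^2g_{22}$, $\dot g_{33} = -\beta\,q(g_{33},-g_{11},g_{22})\,g_{00}^2g_{33}$. This is Bach flow $\partial_t g=B$, $g(0)=h$, on $\mathbb{R}\times\widetilde{SL}(2,\mathbb{R})$ in a diagonalizing basis: a left-invariant frame $\{\partial_0,e_1,e_2,e_3\}$ with $[e_i,e_j]=\sum\varepsilon_{ijl}E^{lk}e_k$, $E=\mathrm{diag}(-1,1,1)$, and $g=\mathrm{diag}(g_{00},g_{11},g_{22},g_{33})$; $B$ is the Bach tensor. Along the flow $g_{00}g_{11}g_{22}g_{33}=\det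 h$. *)

theory Defs
  imports "HOL-Analysis.Analysis"
begin

definition p_SL :: "real \<Rightarrow> real \<Rightarrow> real \<Rightarrow> real" where
  "p_SL x y z = x^4 - x^3*(y+z) + x^2*y*z + x*(-(y^3) + y^2*z + y*z^2 - z^3)
               + y^4 - y^3*z - y*z^3 + z^4"

definition q_SL :: "real \<Rightarrow> real \<Rightarrow> real \<Rightarrow> real" where
  "q_SL x y z = 5*x^4 - 3*x^3*(y+z) + x^2*y*z + x*(y^3 - y^2*z - y*z^2 + z^3)
               - 3*y^4 + 3*y^3*z + 3*y*z^3 - 3*z^4"

definition beta_SL :: "real \<Rightarrow> real \<Rightarrow> real \<Rightarrow> real \<Rightarrow> real" where
  "beta_SL h0 h1 h2 h3 = 1 / (6 * (h0*h1*h2*h3)^2)"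

definition SL_solution ::
  "real \<Rightarrow> real \<Rightarrow> real \<Rightarrow> real \<Rightarrow>
   (real \<Rightarrow> real) \<Rightarrow> (real \<Rightarrow> real) \<Rightarrow> (real \<Rightarrow> real) \<Rightarrow> (real \<Rightarrow> real) \<Rightarrow> bool" where
  "SL_solution h0 h1 h2 h3 g0 g1 g2 g3 \<longleftrightarrow>
     g0 0 = h0 \<and> g1 0 = h1 \<and> g2 0 = h2 \<and> g3 0 = h3 \<and>
     (\<forall>t\<ge>0.
        (g0 has_real_derivative
           (- beta_SL h0 h1 h2 h3 * p_SL (- g1 t) (g2 t) (g3 t) * (g0 t)^3)) (at t within {0..}) \<and>
        (g1 has_real_derivative
           (- beta_SL h0 h1 h2 h3 * q_SL (- g1 t) (g2 t) (g3 t) * (g0 t)^2 * g1 t)) (at t within {0..}) \<and>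
        (g2 has_real_derivative
           (- beta_SL h0 h1 h2 h3 * q_SL (g2 t) (- g1 t) (g3 t) * (g0 t)^2 * g2 t)) (at t within {0..}) \<and>
        (g3 has_real_derivative
           (- beta_SL h0 h1 h2 h3 * q_SL (g3 t) (- g1 t) (g2 t) * (g0 t)^2 * g3 t)) (at t within {0..}))"

end

(*
  The product g00 g11 g22 g33 is conserved, so \<rho> = \<beta> g00\<^sup>2 = 1 / (6 (g11 g22 g33)\<^sup>2).  By the symmetry
  g22 \<leftrightarrow> g33 we may assume g22(0) \<le> g33(0).  The anisotropy w = g33/g22 - 1 solves a linear equation
  with nonpositive rate, so 0 \<le> w \<le> R - 1 with R = g33(0)/g22(0).  The Lyapunov functions
  log g11 + (1 + R + R\<^sup>2) w\<^sup>2/2 and log g22 + R\<^sup>3 w give g11 \<le> u_max and g22\<^sup>2 \<le> Y0 + B t, while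
  g22 is pushed up at rate at least 1/(6 g22 g33), so g22\<^sup>2 \<ge> g22(0)\<^sup>2 + t/(3R).  Hence log g00 and
  log g11 decrease at least like -log (Y0 + B t) / (6 R B), the rate of w stays below -4/(u_max\<^sup>2 R), and
  once w is small and g22 is large the gap g33 - g22 = g22 w decays exponentially.
  The same bounds confine a solution on [0, T] to a compact box on which the polynomial vector field is
  Lipschitz; Picard iteration for the field clamped to that box, uniqueness by Gronwall's argument and
  gluing over T = 1, 2, ... give a global solution.
*)

theory Submission
  imports Defs "HOL-Real_Asymp.Real_Asymp"
begin

lemma has_real_derivative_nonpos_imp_antimono:
  fixes f f' :: "real \<Rightarrow> real"
  assumes deriv: "\<And>x. x \<in> {a..b} \<Longrightarrow> (f has_real_derivative f' x) (at x within {a..b})"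
    and nonpos: "\<And>x. x \<in> {a..b} \<Longrightarrow> f' x \<le> 0"
    and "a \<le> s" "s \<le> t" "t \<le> b"
  shows "f t \<le> f s"
proof -
  have "(f has_derivative (\<lambda>h. f' x * h)) (at x within {s..t})" if "s \<le> x" "x \<le> t" for x
    using DERIV_subset[OF deriv[of x]] that assms(3-5) by (auto simp: has_field_derivative_def)
  from mvt_very_simple[OF \<open>s \<le> t\<close> this] obtain x where "x \<in> {s..t}" "f t - f s = f' x * (t - s)"
    by blast
  moreover have "f' x * (t - s) \<le> 0"
    using nonpos[of x] calculation(1) assms(3-5) by (intro mult_nonpos_nonneg) auto
  ultimately show ?thesis by linarith
qed

lemma has_real_derivative_nonneg_imp_mono:
  fixes f f' :: "real \<Rightarrow> real"
  assumes "\<And>x. x \<in> {a..b} \<Longrightarrow> (f has_real_derivative f' x) (at x within {a..b})"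
    and "\<And>x. x \<in> {a..b} \<Longrightarrow> 0 \<le> f' x"
    and "a \<le> s" "s \<le> t" "t \<le> b"
  shows "f s \<le> f t"
  using has_real_derivative_nonpos_imp_antimono[of a b "\<lambda>x. - f x" "\<lambda>x. - f' x" s t] assms
  by (auto intro: derivative_intros)

lemma linear_ode_eq_exp_integral:
  fixes f k :: "real \<Rightarrow> real"
  assumes deriv: "\<And>x. x \<in> {0..T} \<Longrightarrow> (f has_real_derivative k x * f x) (at x within {0..T})"
    and k: "continuous_on {0..T} k" and t: "t \<in> {0..T}"
  shows "f t = f 0 * exp (integral {0..t} k)"
proof -
  define V where "V x = f x * exp (- integral {0..x} k)" for x
  have "(V has_real_derivative 0) (at x within {0..T})" if "x \<in> {0..T}" for x
    using integral_has_real_derivative[OF k that] unfolding V_def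
    by (auto intro!: derivative_eq_intros deriv that simp: algebra_simps)
  then obtain c where "\<forall>x\<in>{0..T}. V x = c"
    using has_field_derivative_zero_constant[of "{0..T}" V] by auto
  then have "V t = V 0" using t by auto
  then show ?thesis unfolding V_def by (simp add: exp_minus field_simps)
qed

lemma has_real_derivative_ln_linear:
  assumes "(f has_real_derivative c * f x) (at x within S)" and "0 < f x"
  shows "((\<lambda>s. ln (f s)) has_real_derivative c) (at x within S)"
  using DERIV_ln_divide[THEN DERIV_chain2, OF assms(2) assms(1)] assms(2) by simp

lemma has_vector_derivative_quadruple_iff:
  "((\<lambda>t. (f0 t, f1 t, f2 t, f3 t)) has_vector_derivative (d0, d1, d2, d3)) (at x within S) \<longleftrightarrow>
    (f0 has_real_derivative d0) (at x within S) \<and> (f1 has_real_derivative d1) (at x within S) \<and>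
    (f2 has_real_derivative d2) (at x within S) \<and> (f3 has_real_derivative d3) (at x within S)"
  (is "?vec \<longleftrightarrow> ?comps")
proof
  assume ?vec
  note fst = bounded_linear.has_vector_derivative[OF bounded_linear_fst]
    and snd = bounded_linear.has_vector_derivative[OF bounded_linear_snd]
  from fst[OF \<open>?vec\<close>] fst[OF snd[OF \<open>?vec\<close>]] fst[OF snd[OF snd[OF \<open>?vec\<close>]]]
    snd[OF snd[OF snd[OF \<open>?vec\<close>]]]
  show ?comps by (simp add: has_real_derivative_iff_has_vector_derivative)
next
  assume ?comps
  then show ?vec
    unfolding has_real_derivative_iff_has_vector_derivative by (intro has_vector_derivative_Pair) auto
qed


section \<open>The polynomials p and q\<close>

text \<open>
  In the lemmas below \<open>u\<close>, \<open>y\<close>, \<open>z\<close> stand for \<open>g11\<close>, \<open>g22\<close>, \<open>g33\<close>; in the system, \<open>g11\<close> enters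
  \<open>p_SL\<close> and \<open>q_SL\<close> with a minus sign.\<close>

lemma p_SL_swap: "p_SL x z y = p_SL x y z"
  unfolding p_SL_def by (simp add: algebra_simps power2_eq_square power3_eq_cube power4_eq_xxxx)

lemma q_SL_swap: "q_SL x z y = q_SL x y z"
  unfolding q_SL_def by (simp add: algebra_simps power2_eq_square power3_eq_cube power4_eq_xxxx)

text \<open>The Bach tensor is trace-free, which makes the volume \<open>g00 g11 g22 g33\<close> a conserved quantity.\<close>

lemma p_SL_plus_q_SL_sum: "p_SL (-u) y z + q_SL (-u) y z + q_SL y (-u) z + q_SL z (-u) y = 0"
  unfolding q_SL_def p_SL_def by (simp add: algebra_simps power2_eq_square power3_eq_cube power4_eq_xxxx)

lemma p_SL_neg_eq:
  "p_SL (-u) y z = u^4 + u^3*(y+z) + u^2*y*z + u*(y+z)*(y-z)^2 + (y-z)^2*(y^2+y*z+z^2)"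
  unfolding p_SL_def by (simp add: algebra_simps power2_eq_square power3_eq_cube power4_eq_xxxx)

lemma q_SL_neg_first_eq:
  "q_SL (-u) y z = 5*u^4 + 3*u^3*(y+z) + u^2*y*z - (z-y)^2*(u*(y+z) + 3*(y^2+y*z+z^2))"
  unfolding q_SL_def by (simp add: algebra_simps power2_eq_square power3_eq_cube power4_eq_xxxx)

lemma q_SL_neg_second_eq:
  "q_SL y (-u) z = - (z-y)*((3*z^3+2*y*z^2+2*y^2*z+5*y^3) + (3*y^2+2*y*z+3*z^2)*u)
     - u^2*y*z - u^3*(y+3*z) - 3*u^4"
  unfolding q_SL_def by (simp add: algebra_simps power2_eq_square power3_eq_cube power4_eq_xxxx)

lemma p_SL_neg_ge: "0 < u \<Longrightarrow> 0 < y \<Longrightarrow> 0 < z \<Longrightarrow> u^2*y*z \<le> p_SL (-u) y z"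
  unfolding p_SL_neg_eq by (simp add: add_nonneg_nonneg)

lemma q_SL_neg_first_le:
  assumes "0 < u" "0 < y" "0 < z"
  shows "q_SL (-u) y z \<le> u^2 * (5*u^2 + 3*u*(y+z) + y*z)"
proof -
  have "0 \<le> (z-y)^2*(u*(y+z) + 3*(y^2+y*z+z^2))" using assms by simp
  then show ?thesis unfolding q_SL_neg_first_eq
    by (simp add: algebra_simps power2_eq_square power3_eq_cube power4_eq_xxxx)
qed

lemma q_SL_neg_second_le:
  assumes "0 < u" "0 < y" "y \<le> z"
  shows "u^2*y*z \<le> - q_SL y (-u) z"
proof -
  have "0 \<le> (z-y)*((3*z^3+2*y*z^2+2*y^2*z+5*y^3) + (3*y^2+2*y*z+3*z^2)*u)" using assms by simp
  moreover have "0 \<le> u^3*(y+3*z) + 3*u^4" using assms by simp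
  ultimately show ?thesis unfolding q_SL_neg_second_eq by linarith
qed

definition q_diff_factor :: "real \<Rightarrow> real \<Rightarrow> real \<Rightarrow> real" where
  "q_diff_factor u y z = 8*(z+y)*(z^2+y^2) - 4*y*z*(z+y) + 6*u*(z^2+z*y+y^2) - 2*u*y*z + 2*u^3"

lemma q_SL_neg_second_diff: "q_SL z (-u) y - q_SL y (-u) z = (z - y) * q_diff_factor u y z"
  unfolding q_SL_def q_diff_factor_def
  by (simp add: algebra_simps power2_eq_square power3_eq_cube power4_eq_xxxx)

lemma q_diff_factor_lower_bound:
  fixes u y z :: real
  assumes "0 < u" "0 < y" "y \<le> z"
  shows "24*y^3 + 16*u*y^2 \<le> q_diff_factor u y z"
proof -
  have "(2*y)*(12*y^2) \<le> (z+y)*(8*z^2+8*y^2-4*y*z)"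
  proof (rule mult_mono)
    have "8*z^2+8*y^2-4*y*z = 12*y^2 + 4*(2*z+y)*(z-y)" by (simp add: algebra_simps power2_eq_square)
    moreover have "0 \<le> 4*(2*z+y)*(z-y)" using assms by simp
    ultimately show "12*y^2 \<le> 8*z^2+8*y^2-4*y*z" by linarith
  qed (use assms in auto)
  then have "24*y^3 \<le> (z+y)*(8*z^2+8*y^2-4*y*z)" by (simp add: power2_eq_square power3_eq_cube)
  moreover have "6*z^2+4*z*y-10*y^2 = 2*(3*z+5*y)*(z-y)" by (simp add: algebra_simps power2_eq_square)
  then have "0 \<le> u*(6*z^2+4*z*y-10*y^2)" using assms by simp
  moreover have "0 \<le> 2*u^3" using assms by simp
  moreover have "q_diff_factor u y z - 24*y^3 - 16*u*y^2
      = ((z+y)*(8*z^2+8*y^2-4*y*z) - 24*y^3) + u*(6*z^2+4*z*y-10*y^2) + 2*u^3"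
    unfolding q_diff_factor_def by (simp add: algebra_simps power2_eq_square power3_eq_cube)
  ultimately show ?thesis by linarith
qed

lemma q_diff_factor_pos: "0 < u \<Longrightarrow> 0 < y \<Longrightarrow> y \<le> z \<Longrightarrow> 0 < q_diff_factor u y z"
  using q_diff_factor_lower_bound[of u y z] by (smt (verit) mult_pos_pos zero_less_power)

text \<open>
  With \<open>w = z/y - 1\<close>, the defect terms of \<open>q\<close> (of order \<open>w\<close> and \<open>w\<^sup>2\<close>) are absorbed by
  \<open>q_diff_factor\<close>, which drives the decay of \<open>w\<close>.\<close>

lemma q_SL_neg_first_absorb:
  fixes u y z R :: real
  assumes "0 < u" "0 < y" "y \<le> z" "z \<le> R*y" "1 \<le> R"
  shows "u^2*y*z \<le> q_SL (-u) y z + (1+R+R^2) * (z/y - 1)^2 * z * q_diff_factor u y z"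
proof -
  define C where "C = 1+R+R^2"
  define M where "M = u*(y+z) + 3*(y^2+y*z+z^2)"
  define w where "w = z/y - 1"
  have C_ge: "1 + R \<le> C" "3 \<le> 3 * C" using assms unfolding C_def by auto
  have "y*M \<le> (1+R)*(u*y^2) + (3*C)*y^3"
  proof -
    have "u*(y+z) \<le> u*((1+R)*y)" using assms by (intro mult_left_mono) (auto simp: algebra_simps)
    moreover have "y^2+y*z+z^2 \<le> C*y^2"
    proof -
      have "y*z \<le> R*y^2" "z^2 \<le> (R*y)^2"
        using assms by (auto simp: power2_eq_square intro!: mult_mono)
      then show ?thesis unfolding C_def by (simp add: algebra_simps power_mult_distrib)
    qed
    ultimately have "M \<le> (1+R)*u*y + 3*C*y^2" unfolding M_def by (simp add: algebra_simps)
    from mult_left_mono[OF this, of y] assms show ?thesis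
      by (simp add: algebra_simps power2_eq_square power3_eq_cube)
  qed
  also have "\<dots> \<le> (16*C)*(u*y^2) + (24*C)*y^3"
    using C_ge assms by (intro add_mono mult_right_mono) auto
  also have "\<dots> = C * (16*u*y^2 + 24*y^3)" by (simp add: algebra_simps)
  also have "\<dots> \<le> C * q_diff_factor u y z"
    using q_diff_factor_lower_bound[OF assms(1-3)] assms C_ge by (intro mult_left_mono) auto
  finally have yM: "y*M \<le> C * q_diff_factor u y z" .
  have "y*(y*M) \<le> y*(C * q_diff_factor u y z)" using yM assms by (intro mult_left_mono) auto
  also have "\<dots> \<le> z*(C * q_diff_factor u y z)"
    using assms C_ge q_diff_factor_pos[OF assms(1-3)] by (intro mult_right_mono) auto
  finally have "y*(y*M) \<le> z*(C * q_diff_factor u y z)" .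
  have "(z-y)^2*M = w^2 * (y*(y*M))" using assms unfolding w_def by (simp add: field_simps power2_eq_square)
  also have "\<dots> \<le> w^2 * (z*(C * q_diff_factor u y z))"
    using \<open>y*(y*M) \<le> z*(C * q_diff_factor u y z)\<close> by (intro mult_left_mono) auto
  finally have "(z-y)^2*M \<le> C * w^2 * z * q_diff_factor u y z" by (simp add: mult_ac)
  moreover have "0 \<le> u^2*(5*u^2 + 3*u*(y+z))" using assms by simp
  ultimately show ?thesis unfolding q_SL_neg_first_eq M_def C_def w_def
    by (simp add: algebra_simps power2_eq_square power4_eq_xxxx power3_eq_cube)
qed

lemma q_SL_neg_second_absorb:
  fixes u y z R :: real
  assumes "0 < u" "0 < y" "y \<le> z" "z \<le> R*y" "1 \<le> R"
  shows "- q_SL y (-u) z - R^3 * z * q_diff_factor u y z * (z/y - 1) \<le> u^2*y*z + u^3*(y+3*z) + 3*u^4"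
proof -
  define A where "A = (3*z^3+2*y*z^2+2*y^2*z+5*y^3) + (3*y^2+2*y*z+3*z^2)*u"
  have R_pows: "1 \<le> R^2" "R^2 \<le> R^3" "R \<le> R^3" "1 \<le> R^3"
    using assms power_increasing[of 2 3 R] power_increasing[of 1 3 R] by simp_all
  have zz: "z^2 \<le> (R*y)^2" and zzz: "z^3 \<le> (R*y)^3" using assms by (auto intro!: power_mono)
  have "3*z^3+2*y*z^2+2*y^2*z+5*y^3 \<le> 3*(R*y)^3+2*y*(R*y)^2+2*y^2*(R*y)+5*y^3"
    using zz zzz assms by (intro add_mono mult_left_mono) auto
  also have "\<dots> = (3*R^3+2*R^2+2*R+5)*y^3" by (simp add: algebra_simps power2_eq_square power3_eq_cube)
  also have "\<dots> \<le> (24*R^3)*y^3" using R_pows assms by (intro mult_right_mono) auto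
  finally have A1: "3*z^3+2*y*z^2+2*y^2*z+5*y^3 \<le> 24*R^3*y^3" .
  have "(3*y^2+2*y*z+3*z^2)*u \<le> (3*y^2+2*y*(R*y)+3*(R*y)^2)*u"
    using zz assms by (intro mult_right_mono add_mono) auto
  also have "\<dots> = (3+2*R+3*R^2)*(u*y^2)" by (simp add: algebra_simps power2_eq_square)
  also have "\<dots> \<le> (16*R^3)*(u*y^2)" using R_pows assms by (intro mult_right_mono) auto
  finally have "A \<le> R^3 * (24*y^3 + 16*u*y^2)" using A1 unfolding A_def by (simp add: algebra_simps)
  also have "\<dots> \<le> R^3 * q_diff_factor u y z"
    using q_diff_factor_lower_bound[OF assms(1-3)] assms by (intro mult_left_mono) auto
  finally have KA: "A \<le> R^3 * q_diff_factor u y z" .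
  define w where "w = z/y - 1"
  have w: "z - y = y*w" "0 \<le> w" unfolding w_def using assms by (auto simp: field_simps)
  have "(z-y)*A = (y*w)*A" using w by simp
  also have "\<dots> \<le> (y*w)*(R^3 * q_diff_factor u y z)" using KA w assms by (intro mult_left_mono) auto
  also have "\<dots> \<le> z*w*(R^3 * q_diff_factor u y z)"
    using assms w q_diff_factor_pos[OF assms(1-3)] R_pows by (intro mult_right_mono) auto
  finally have "(z-y)*A \<le> z*w*(R^3 * q_diff_factor u y z)" .
  then show ?thesis unfolding q_SL_neg_second_eq A_def[symmetric] w_def[symmetric]
    by (simp add: algebra_simps)
qed

lemma g1_decay_rate_bound:
  fixes u y z U h :: real
  assumes "0 < u" "u \<le> U" "0 < h" "h \<le> y" "y \<le> z"
  shows "(5*u^2 + 3*u*(y+z) + y*z) / (6*y^2*z^2) \<le> 5*U^2/(6*h^4) + U/h^3 + 1/(6*h^2)"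
proof -
  have y0: "y > 0" and z0: "z > 0" using assms by auto
  have e: "(5*u^2 + 3*u*(y+z) + y*z) / (6*y^2*z^2) =
      5*u^2/(6*y^2*z^2) + u/(2*y*z^2) + u/(2*y^2*z) + 1/(6*y*z)"
    using y0 z0 by (simp add: field_simps power2_eq_square)
  have hy: "h^2 \<le> y^2" "h^2 \<le> z^2" "h*h \<le> y*z" using assms by (auto intro!: power_mono mult_mono)
  have "h^4 \<le> y^2*z^2" using hy mult_mono[of "h^2" "y^2" "h^2" "z^2"]
    by (simp add: power4_eq_xxxx power2_eq_square)
  then have t1: "5*u^2/(6*y^2*z^2) \<le> 5*U^2/(6*h^4)"
    using assms by (intro frac_le power_mono) auto
  have "2*h^3 \<le> 2*y*z^2" using assms hy mult_mono[of h y "h^2" "z^2"]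
    by (simp add: power3_eq_cube power2_eq_square mult_ac)
  then have t2: "u/(2*y*z^2) \<le> U/(2*h^3)" using assms by (intro frac_le) auto
  have "2*h^3 \<le> 2*y^2*z" using assms hy mult_mono[of "h^2" "y^2" h z]
    by (simp add: power3_eq_cube power2_eq_square mult_ac)
  then have t3: "u/(2*y^2*z) \<le> U/(2*h^3)" using assms by (intro frac_le) auto
  have t4: "1/(6*y*z) \<le> 1/(6*h^2)" using hy assms by (intro frac_le) (auto simp: power2_eq_square)
  show ?thesis unfolding e using t1 t2 t3 t4 by linarith
qed

lemma g2_growth_rate_bound:
  fixes u y z U h :: real
  assumes "0 < u" "u \<le> U" "0 < h" "h \<le> y" "y \<le> z"
  shows "(u^2*y*z + u^3*(y+3*z) + 3*u^4) / (6*(u*y*z)^2) \<le> (1/6 + 2*U/(3*h) + U^2/(2*h^2)) / y^2"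
proof -
  have y0: "y > 0" and z0: "z > 0" using assms by auto
  have e: "(u^2*y*z + u^3*(y+3*z) + 3*u^4) / (6*(u*y*z)^2)
      = 1/(6*y*z) + u*(y+3*z)/(6*y^2*z^2) + u^2/(2*y^2*z^2)"
    using assms y0 z0 by (simp add: field_simps power2_eq_square power3_eq_cube power4_eq_xxxx)
  have t1: "1/(6*y*z) \<le> (1/6)/y^2"
    using y0 z0 assms by (simp add: field_simps power2_eq_square mult_left_mono)
  have "u*(y+3*z)/(6*y^2*z^2) \<le> U*(4*z)/(6*y^2*z^2)"
    using assms y0 z0 by (intro divide_right_mono mult_mono) auto
  also have "\<dots> = (2*U/(3*z))/y^2" using y0 z0 by (simp add: field_simps power2_eq_square)
  also have "\<dots> \<le> (2*U/(3*h))/y^2" using assms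
    by (intro divide_right_mono divide_left_mono) (auto intro: mult_pos_pos)
  finally have t2: "u*(y+3*z)/(6*y^2*z^2) \<le> (2*U/(3*h))/y^2" .
  have "u^2/(2*z^2) \<le> U^2/(2*h^2)" using assms by (intro frac_le power_mono) auto
  then have t3: "u^2/(2*y^2*z^2) \<le> (U^2/(2*h^2))/y^2"
    using y0 divide_right_mono[of "u^2/(2*z^2)" "U^2/(2*h^2)" "y^2"] by (simp add: field_simps)
  show ?thesis unfolding e using t1 t2 t3 by (simp add: add_divide_distrib)
qed


definition SL_solution_on ::
  "real \<Rightarrow> real \<Rightarrow> real \<Rightarrow> real \<Rightarrow> real \<Rightarrow>
   (real \<Rightarrow> real) \<Rightarrow> (real \<Rightarrow> real) \<Rightarrow> (real \<Rightarrow> real) \<Rightarrow> (real \<Rightarrow> real) \<Rightarrow> bool" where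
  "SL_solution_on h0 h1 h2 h3 T g0 g1 g2 g3 \<longleftrightarrow>
     g0 0 = h0 \<and> g1 0 = h1 \<and> g2 0 = h2 \<and> g3 0 = h3 \<and>
     (\<forall>t\<in>{0..T}.
        (g0 has_real_derivative
           (- beta_SL h0 h1 h2 h3 * p_SL (- g1 t) (g2 t) (g3 t) * (g0 t)^3)) (at t within {0..T}) \<and>
        (g1 has_real_derivative
           (- beta_SL h0 h1 h2 h3 * q_SL (- g1 t) (g2 t) (g3 t) * (g0 t)^2 * g1 t)) (at t within {0..T}) \<and>
        (g2 has_real_derivative
           (- beta_SL h0 h1 h2 h3 * q_SL (g2 t) (- g1 t) (g3 t) * (g0 t)^2 * g2 t)) (at t within {0..T}) \<and>
        (g3 has_real_derivative
           (- beta_SL h0 h1 h2 h3 * q_SL (g3 t) (- g1 t) (g2 t) * (g0 t)^2 * g3 t)) (at t within {0..T}))"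

definition SL_field :: "real \<Rightarrow> real \<times> real \<times> real \<times> real \<Rightarrow> real \<times> real \<times> real \<times> real" where
  "SL_field b = (\<lambda>(a, u, y, z). (- b * p_SL (- u) y z * a^3, - b * q_SL (- u) y z * a^2 * u,
      - b * q_SL y (- u) z * a^2 * y, - b * q_SL z (- u) y * a^2 * z))"

lemma SL_solution_on_iff:
  "SL_solution_on h0 h1 h2 h3 T g0 g1 g2 g3 \<longleftrightarrow>
    (g0 0, g1 0, g2 0, g3 0) = (h0, h1, h2, h3) \<and>
    (\<forall>t\<in>{0..T}. ((\<lambda>t. (g0 t, g1 t, g2 t, g3 t)) has_vector_derivative
      SL_field (beta_SL h0 h1 h2 h3) (g0 t, g1 t, g2 t, g3 t)) (at t within {0..T}))"
  unfolding SL_solution_on_def SL_field_def by (simp add: has_vector_derivative_quadruple_iff)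

lemma SL_solution_iff:
  "SL_solution h0 h1 h2 h3 g0 g1 g2 g3 \<longleftrightarrow>
    (g0 0, g1 0, g2 0, g3 0) = (h0, h1, h2, h3) \<and>
    (\<forall>t\<ge>0. ((\<lambda>t. (g0 t, g1 t, g2 t, g3 t)) has_vector_derivative
      SL_field (beta_SL h0 h1 h2 h3) (g0 t, g1 t, g2 t, g3 t)) (at t within {0..}))"
  unfolding SL_solution_def SL_field_def by (simp add: has_vector_derivative_quadruple_iff)


section \<open>A priori estimates on a finite time interval\<close>

text \<open>
  \<open>R\<close> bounds the ratio \<open>g33/g22\<close>, \<open>u_max\<close> bounds \<open>g11\<close>, \<open>Y0 + B t\<close> bounds \<open>g22\<^sup>2\<close>, and \<open>\<kappa>\<close> is
  the rate of exponential decay of \<open>g33/g22 - 1\<close>.\<close>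

locale SL_data =
  fixes h0 h1 h2 h3 :: real
  assumes h_pos: "0 < h0" "0 < h1" "0 < h2" "0 < h3" and h2_le_h3: "h2 \<le> h3"
begin

definition "\<beta> = beta_SL h0 h1 h2 h3"
definition "det_h = h0 * h1 * h2 * h3"
definition "R = h3 / h2"
definition "u_max = h1 * exp ((1 + R + R^2) * (R - 1)^2 / 2)"
definition "c_growth = 1/6 + 2 * u_max / (3 * h2) + u_max^2 / (2 * h2^2)"
definition "B = 2 * c_growth * exp (2 * R^3 * (R - 1))"
definition "Y0 = h2^2 * exp (2 * R^3 * (R - 1))"
definition "c_decay = 5 * u_max^2 / (6 * h2^4) + u_max / h2^3 + 1 / (6 * h2^2)"
definition "\<kappa> = 4 / (u_max^2 * R)"
definition "log_growth t = ln (Y0 + B * t) / (6 * R * B)" for t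

lemma R_ge_1: "1 \<le> R"
  using h_pos h2_le_h3 unfolding R_def by simp

lemma R_pos: "0 < R"
  using R_ge_1 by simp

lemma R_neq_0: "R \<noteq> 0"
  using R_ge_1 by simp

lemma det_h_pos: "0 < det_h"
  using h_pos unfolding det_h_def by simp

lemma \<beta>_eq: "\<beta> = 1 / (6 * det_h^2)"
  unfolding \<beta>_def det_h_def beta_SL_def by simp

lemma u_max_pos: "0 < u_max"
  unfolding u_max_def using h_pos by simp

lemma c_growth_pos: "0 < c_growth"
  unfolding c_growth_def using u_max_pos h_pos by (simp add: add_pos_nonneg)

lemma B_pos: "0 < B"
  unfolding B_def using c_growth_pos by simp

lemma Y0_pos: "0 < Y0"
  unfolding Y0_def using h_pos by simp

lemma c_decay_nonneg: "0 \<le> c_decay"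
  unfolding c_decay_def using u_max_pos h_pos by simp

lemma \<kappa>_pos: "0 < \<kappa>"
  unfolding \<kappa>_def using u_max_pos R_ge_1 by simp

lemma log_growth_deriv:
  "0 \<le> t \<Longrightarrow> (log_growth has_real_derivative 1 / (6 * R * (Y0 + B * t))) (at t within S)"
  unfolding log_growth_def[abs_def] using Y0_pos B_pos R_ge_1
  by (auto intro!: derivative_eq_intros simp: add_pos_nonneg)

definition "lower_corner T = (det_h / (u_max * R * (Y0 + B * T)), h1 * exp (- c_decay * T), h2, h2)"
definition "upper_corner T = (h0, u_max, sqrt (Y0 + B * T), R * sqrt (Y0 + B * T))"

end

locale SL_on_interval = SL_data +
  fixes T :: real and g0 g1 g2 g3 :: "real \<Rightarrow> real"
  assumes solution: "SL_solution_on h0 h1 h2 h3 T g0 g1 g2 g3"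
begin

lemma initial_values: "g0 0 = h0" "g1 0 = h1" "g2 0 = h2" "g3 0 = h3"
  using solution unfolding SL_solution_on_def by auto

definition "\<rho> t = \<beta> * (g0 t)^2" for t

lemma SL_deriv:
  assumes "t \<in> {0..T}"
  shows "(g0 has_real_derivative (- \<rho> t * p_SL (- g1 t) (g2 t) (g3 t)) * g0 t) (at t within {0..T})"
    and "(g1 has_real_derivative (- \<rho> t * q_SL (- g1 t) (g2 t) (g3 t)) * g1 t) (at t within {0..T})"
    and "(g2 has_real_derivative (- \<rho> t * q_SL (g2 t) (- g1 t) (g3 t)) * g2 t) (at t within {0..T})"
    and "(g3 has_real_derivative (- \<rho> t * q_SL (g3 t) (- g1 t) (g2 t)) * g3 t) (at t within {0..T})"
  using solution assms unfolding SL_solution_on_def \<rho>_def \<beta>_def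
  by (auto simp: power3_eq_cube power2_eq_square mult_ac)

lemma components_continuous: "continuous_on {0..T} g0" "continuous_on {0..T} g1"
    "continuous_on {0..T} g2" "continuous_on {0..T} g3"
  by (rule DERIV_continuous_on, erule SL_deriv)+

lemma \<rho>_continuous: "continuous_on {0..T} \<rho>"
  unfolding \<rho>_def[abs_def] by (intro continuous_intros components_continuous)

lemma positive:
  assumes t: "t \<in> {0..T}"
  shows "0 < g0 t" "0 < g1 t" "0 < g2 t" "0 < g3 t"
proof -
  have k: "continuous_on {0..T} (\<lambda>x. - \<rho> x * p_SL (- g1 x) (g2 x) (g3 x))"
      "continuous_on {0..T} (\<lambda>x. - \<rho> x * q_SL (- g1 x) (g2 x) (g3 x))"
      "continuous_on {0..T} (\<lambda>x. - \<rho> x * q_SL (g2 x) (- g1 x) (g3 x))"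
      "continuous_on {0..T} (\<lambda>x. - \<rho> x * q_SL (g3 x) (- g1 x) (g2 x))"
    unfolding p_SL_def q_SL_def by (intro continuous_intros components_continuous \<rho>_continuous)+
  show "0 < g0 t" "0 < g1 t" "0 < g2 t" "0 < g3 t"
    using linear_ode_eq_exp_integral[OF SL_deriv(1) k(1) t] linear_ode_eq_exp_integral[OF SL_deriv(2) k(2) t]
      linear_ode_eq_exp_integral[OF SL_deriv(3) k(3) t] linear_ode_eq_exp_integral[OF SL_deriv(4) k(4) t]
      initial_values h_pos by simp_all
qed

lemma log_deriv:
  assumes t: "t \<in> {0..T}"
  shows "((\<lambda>s. ln (g0 s)) has_real_derivative - \<rho> t * p_SL (- g1 t) (g2 t) (g3 t)) (at t within {0..T})"
    and "((\<lambda>s. ln (g1 s)) has_real_derivative - \<rho> t * q_SL (- g1 t) (g2 t) (g3 t)) (at t within {0..T})"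
    and "((\<lambda>s. ln (g2 s)) has_real_derivative - \<rho> t * q_SL (g2 t) (- g1 t) (g3 t)) (at t within {0..T})"
    and "((\<lambda>s. ln (g3 s)) has_real_derivative - \<rho> t * q_SL (g3 t) (- g1 t) (g2 t)) (at t within {0..T})"
  by (rule has_real_derivative_ln_linear[OF SL_deriv(1)[OF t] positive(1)[OF t]]
      has_real_derivative_ln_linear[OF SL_deriv(2)[OF t] positive(2)[OF t]]
      has_real_derivative_ln_linear[OF SL_deriv(3)[OF t] positive(3)[OF t]]
      has_real_derivative_ln_linear[OF SL_deriv(4)[OF t] positive(4)[OF t]])+

lemma volume_conserved:
  assumes t: "t \<in> {0..T}"
  shows "g0 t * g1 t * g2 t * g3 t = det_h"
proof -
  define L where "L s = ln (g0 s) + ln (g1 s) + ln (g2 s) + ln (g3 s)" for s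
  have "(L has_real_derivative 0) (at s within {0..T})" if "s \<in> {0..T}" for s
  proof -
    have "(L has_real_derivative - \<rho> s * (p_SL (- g1 s) (g2 s) (g3 s) + q_SL (- g1 s) (g2 s) (g3 s)
        + q_SL (g2 s) (- g1 s) (g3 s) + q_SL (g3 s) (- g1 s) (g2 s))) (at s within {0..T})"
      unfolding L_def by (rule derivative_eq_intros log_deriv that refl | simp add: algebra_simps)+
    then show ?thesis by (simp add: p_SL_plus_q_SL_sum)
  qed
  then obtain c where "\<forall>s\<in>{0..T}. L s = c"
    using has_field_derivative_zero_constant[of "{0..T}" L] by auto
  then have "L t = L 0" using t by auto
  then have "ln (g0 t * g1 t * g2 t * g3 t) = ln det_h"
    using positive[OF t] positive[of 0] t initial_values h_pos
    unfolding L_def det_h_def by (simp add: ln_mult)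
  then show ?thesis using positive[OF t] det_h_pos by simp
qed

lemma \<rho>_eq:
  assumes t: "t \<in> {0..T}"
  shows "\<rho> t = 1 / (6 * (g1 t * g2 t * g3 t)^2)"
proof -
  have "\<rho> t * (6 * (g1 t * g2 t * g3 t)^2) = 6 * \<beta> * (g0 t * g1 t * g2 t * g3 t)^2"
    unfolding \<rho>_def by (simp add: power2_eq_square)
  also have "\<dots> = 1" using volume_conserved[OF t] \<beta>_eq det_h_pos by simp
  finally show ?thesis using positive[OF t] by (simp add: field_simps)
qed

lemma \<rho>_pos: "t \<in> {0..T} \<Longrightarrow> 0 < \<rho> t"
  using \<rho>_eq[of t] positive[of t] by simp

lemma \<rho>_times_volume: "t \<in> {0..T} \<Longrightarrow> \<rho> t * ((g1 t)^2 * g2 t * g3 t) = 1 / (6 * g2 t * g3 t)"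
  using positive[of t] by (simp add: \<rho>_eq field_simps power2_eq_square)

definition "w t = g3 t / g2 t - 1" for t
definition "w_rate t = - \<rho> t * g3 t * q_diff_factor (g1 t) (g2 t) (g3 t)" for t

lemma w_deriv:
  assumes t: "t \<in> {0..T}"
  shows "(w has_real_derivative w_rate t * w t) (at t within {0..T})"
proof -
  note pos = positive[OF t]
  have "(w has_real_derivative ((- \<rho> t * q_SL (g3 t) (- g1 t) (g2 t)) * g3 t * g2 t
        - g3 t * ((- \<rho> t * q_SL (g2 t) (- g1 t) (g3 t)) * g2 t)) / (g2 t * g2 t) - 0) (at t within {0..T})"
    unfolding w_def[abs_def] using pos by (intro DERIV_diff DERIV_divide SL_deriv t DERIV_const) auto
  moreover have "((- \<rho> t * q_SL (g3 t) (- g1 t) (g2 t)) * g3 t * g2 t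
        - g3 t * ((- \<rho> t * q_SL (g2 t) (- g1 t) (g3 t)) * g2 t)) / (g2 t * g2 t) - 0
      = - \<rho> t * g3 t * (q_SL (g3 t) (- g1 t) (g2 t) - q_SL (g2 t) (- g1 t) (g3 t)) / g2 t"
    using pos by (simp add: field_simps)
  moreover have "\<dots> = w_rate t * w t"
    using pos unfolding q_SL_neg_second_diff w_rate_def w_def by (simp add: field_simps)
  ultimately show ?thesis by simp
qed

lemma w_rate_continuous: "continuous_on {0..T} w_rate"
  unfolding w_rate_def[abs_def] q_diff_factor_def by (intro continuous_intros components_continuous \<rho>_continuous)

lemma w_initial: "w 0 = R - 1"
  unfolding w_def R_def using initial_values by simp

lemma w_nonneg: "t \<in> {0..T} \<Longrightarrow> 0 \<le> w t"
  using linear_ode_eq_exp_integral[OF w_deriv w_rate_continuous] w_initial R_ge_1 by simp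

lemma g2_le_g3: "t \<in> {0..T} \<Longrightarrow> g2 t \<le> g3 t"
  using w_nonneg[of t] positive[of t] unfolding w_def by (simp add: field_simps)

lemma w_rate_nonpos: "t \<in> {0..T} \<Longrightarrow> w_rate t \<le> 0"
  using q_diff_factor_pos[of "g1 t" "g2 t" "g3 t"] positive[of t] g2_le_g3[of t] \<rho>_pos[of t]
  unfolding w_rate_def by simp

lemma w_le: "t \<in> {0..T} \<Longrightarrow> w t \<le> R - 1"
  using has_real_derivative_nonpos_imp_antimono[OF w_deriv, of 0 t]
    w_initial w_rate_nonpos w_nonneg by (auto simp: mult_nonpos_nonneg)

lemma g3_le_R_g2: "t \<in> {0..T} \<Longrightarrow> g3 t \<le> R * g2 t"
  using w_le[of t] positive[of t] unfolding w_def by (simp add: field_simps)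

lemma inv_volume_pos: "t \<in> {0..T} \<Longrightarrow> 0 < 1 / (6 * g2 t * g3 t)"
  using positive[of t] by simp

lemma g0_log_deriv_le:
  assumes t: "t \<in> {0..T}"
  shows "- \<rho> t * p_SL (- g1 t) (g2 t) (g3 t) \<le> - 1 / (6 * g2 t * g3 t)"
proof -
  have "\<rho> t * ((g1 t)^2 * g2 t * g3 t) \<le> \<rho> t * p_SL (- g1 t) (g2 t) (g3 t)"
    using p_SL_neg_ge positive[OF t] \<rho>_pos[OF t] by (intro mult_left_mono) auto
  then show ?thesis using \<rho>_times_volume[OF t] by linarith
qed

lemma g2_log_deriv_ge:
  assumes t: "t \<in> {0..T}"
  shows "1 / (6 * g2 t * g3 t) \<le> - \<rho> t * q_SL (g2 t) (- g1 t) (g3 t)"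
proof -
  have "\<rho> t * ((g1 t)^2 * g2 t * g3 t) \<le> \<rho> t * (- q_SL (g2 t) (- g1 t) (g3 t))"
    using q_SL_neg_second_le positive[OF t] g2_le_g3[OF t] \<rho>_pos[OF t] by (intro mult_left_mono) auto
  then show ?thesis using \<rho>_times_volume[OF t] by linarith
qed

lemma g0_le_h0:
  assumes t: "t \<in> {0..T}"
  shows "g0 t \<le> h0"
proof -
  have "g0 t \<le> g0 0"
  proof (rule has_real_derivative_nonpos_imp_antimono[OF SL_deriv(1)])
    fix x assume x: "x \<in> {0..T}"
    have "- \<rho> x * p_SL (- g1 x) (g2 x) (g3 x) \<le> 0"
      using g0_log_deriv_le[OF x] inv_volume_pos[OF x] by linarith
    then show "(- \<rho> x * p_SL (- g1 x) (g2 x) (g3 x)) * g0 x \<le> 0"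
      using positive[OF x] by (simp add: mult_nonpos_nonneg)
  qed (use t in auto)
  then show ?thesis using initial_values by simp
qed

lemma h2_le_g2:
  assumes t: "t \<in> {0..T}"
  shows "h2 \<le> g2 t"
proof -
  have "g2 0 \<le> g2 t"
  proof (rule has_real_derivative_nonneg_imp_mono[OF SL_deriv(3)])
    fix x assume x: "x \<in> {0..T}"
    have "0 \<le> - \<rho> x * q_SL (g2 x) (- g1 x) (g3 x)"
      using g2_log_deriv_ge[OF x] inv_volume_pos[OF x] by linarith
    then show "0 \<le> (- \<rho> x * q_SL (g2 x) (- g1 x) (g3 x)) * g2 x"
      by (rule mult_nonneg_nonneg) (use positive[OF x] in simp)
  qed (use t in auto)
  then show ?thesis using initial_values by simp
qed

lemma h2_le_g3: "t \<in> {0..T} \<Longrightarrow> h2 \<le> g3 t"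
  using h2_le_g2 g2_le_g3 by (blast intro: order_trans)

text \<open>A Lyapunov function bounding \<open>g11\<close>: the growth term of \<open>log g11\<close> is paid for by the decay of \<open>w\<close>.\<close>

definition "lyap_g1 t = ln (g1 t) + (1 + R + R^2) * (w t)^2 / 2" for t

lemma lyap_g1_deriv:
  assumes t: "t \<in> {0..T}"
  shows "(lyap_g1 has_real_derivative
      - \<rho> t * q_SL (- g1 t) (g2 t) (g3 t) + (1 + R + R^2) * w t * (w_rate t * w t)) (at t within {0..T})"
  unfolding lyap_g1_def[abs_def] by (rule derivative_eq_intros log_deriv(2) w_deriv t refl | simp)+

lemma lyap_g1_deriv_le:
  assumes t: "t \<in> {0..T}"
  shows "- \<rho> t * q_SL (- g1 t) (g2 t) (g3 t) + (1 + R + R^2) * w t * (w_rate t * w t)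
    \<le> - 1 / (6 * g2 t * g3 t)"
proof -
  define K where "K = q_diff_factor (g1 t) (g2 t) (g3 t)"
  have "(g1 t)^2 * g2 t * g3 t \<le> q_SL (- g1 t) (g2 t) (g3 t) + (1 + R + R^2) * (w t)^2 * g3 t * K"
    using q_SL_neg_first_absorb[of "g1 t" "g2 t" "g3 t" R] positive[OF t] g2_le_g3[OF t]
      g3_le_R_g2[OF t] R_ge_1 unfolding w_def K_def by simp
  from mult_left_mono[OF this, of "\<rho> t"] have
    "1 / (6 * g2 t * g3 t) \<le> \<rho> t * q_SL (- g1 t) (g2 t) (g3 t) + (1 + R + R^2) * (w t)^2 * (\<rho> t * g3 t * K)"
    using \<rho>_pos[OF t] \<rho>_times_volume[OF t] by (simp add: algebra_simps)
  moreover have "(1 + R + R^2) * w t * (w_rate t * w t) = - ((1 + R + R^2) * (w t)^2 * (\<rho> t * g3 t * K))"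
    unfolding w_rate_def K_def by (simp add: power2_eq_square algebra_simps)
  ultimately show ?thesis by linarith
qed

lemma g1_le_u_max:
  assumes t: "t \<in> {0..T}"
  shows "g1 t \<le> u_max"
proof -
  have "lyap_g1 t \<le> lyap_g1 0"
  proof (rule has_real_derivative_nonpos_imp_antimono[OF lyap_g1_deriv])
    fix x assume x: "x \<in> {0..T}"
    have "- 1 / (6 * g2 x * g3 x) \<le> 0" using inv_volume_pos[OF x] by simp
    then show "- \<rho> x * q_SL (- g1 x) (g2 x) (g3 x) + (1 + R + R^2) * w x * (w_rate x * w x) \<le> 0"
      using lyap_g1_deriv_le[OF x] by linarith
  qed (use t in auto)
  moreover have "0 \<le> (1 + R + R^2) * (w t)^2 / 2" using R_ge_1 by simp
  ultimately have "ln (g1 t) \<le> ln h1 + (1 + R + R^2) * (R - 1)^2 / 2"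
    unfolding lyap_g1_def using initial_values w_initial by simp
  then have "exp (ln (g1 t)) \<le> exp (ln h1 + (1 + R + R^2) * (R - 1)^2 / 2)" by simp
  then show ?thesis using positive[OF t] h_pos unfolding u_max_def by (simp add: exp_add)
qed

lemma g1_lower:
  assumes t: "t \<in> {0..T}"
  shows "ln h1 - c_decay * t \<le> ln (g1 t)"
proof -
  have "ln (g1 0) + c_decay * 0 \<le> ln (g1 t) + c_decay * t"
  proof (rule has_real_derivative_nonneg_imp_mono[of 0 T "\<lambda>x. ln (g1 x) + c_decay * x"
        "\<lambda>x. - \<rho> x * q_SL (- g1 x) (g2 x) (g3 x) + c_decay"])
    fix x assume x: "x \<in> {0..T}"
    show "((\<lambda>x. ln (g1 x) + c_decay * x) has_real_derivative - \<rho> x * q_SL (- g1 x) (g2 x) (g3 x) + c_decay)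
        (at x within {0..T})"
      by (rule derivative_eq_intros log_deriv(2) x refl | simp)+
    note pos = positive[OF x]
    have "\<rho> x * q_SL (- g1 x) (g2 x) (g3 x) \<le> \<rho> x * ((g1 x)^2 * (5*(g1 x)^2 + 3*g1 x*(g2 x + g3 x) + g2 x*g3 x))"
      using q_SL_neg_first_le[of "g1 x" "g2 x" "g3 x"] pos \<rho>_pos[OF x] by (intro mult_left_mono) auto
    also have "\<dots> = (5*(g1 x)^2 + 3*g1 x*(g2 x + g3 x) + g2 x*g3 x) / (6*(g2 x)^2*(g3 x)^2)"
      unfolding \<rho>_eq[OF x] using pos by (simp add: field_simps power2_eq_square)
    also have "\<dots> \<le> c_decay" unfolding c_decay_def
      by (rule g1_decay_rate_bound) (use pos g1_le_u_max[OF x] h2_le_g2[OF x] g2_le_g3[OF x] h_pos in auto)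
    finally show "0 \<le> - \<rho> x * q_SL (- g1 x) (g2 x) (g3 x) + c_decay" by linarith
  qed (use t in auto)
  then show ?thesis using initial_values by simp
qed

lemma g2_sq_lower:
  assumes t: "t \<in> {0..T}"
  shows "h2^2 + t / (3 * R) \<le> (g2 t)^2"
proof -
  have "(g2 0)^2 - 0 / (3 * R) \<le> (g2 t)^2 - t / (3 * R)"
  proof (rule has_real_derivative_nonneg_imp_mono[of 0 T "\<lambda>x. (g2 x)^2 - x / (3 * R)"
        "\<lambda>x. 2 * (g2 x)^2 * (- \<rho> x * q_SL (g2 x) (- g1 x) (g3 x)) - 1 / (3 * R)"])
    fix x assume x: "x \<in> {0..T}"
    show "((\<lambda>x. (g2 x)^2 - x / (3 * R)) has_real_derivative
        2 * (g2 x)^2 * (- \<rho> x * q_SL (g2 x) (- g1 x) (g3 x)) - 1 / (3 * R)) (at x within {0..T})"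
      by (rule derivative_eq_intros SL_deriv(3) x refl | simp add: power2_eq_square R_neq_0)+
    note pos = positive[OF x]
    have "2 * (g2 x)^2 * (1 / (6 * g2 x * g3 x)) \<le> 2 * (g2 x)^2 * (- \<rho> x * q_SL (g2 x) (- g1 x) (g3 x))"
      using g2_log_deriv_ge[OF x] by (intro mult_left_mono) auto
    moreover have "1 / (3 * R) \<le> 2 * (g2 x)^2 * (1 / (6 * g2 x * g3 x))"
      using g3_le_R_g2[OF x] pos R_ge_1 by (simp add: field_simps power2_eq_square)
    ultimately show "0 \<le> 2 * (g2 x)^2 * (- \<rho> x * q_SL (g2 x) (- g1 x) (g3 x)) - 1 / (3 * R)" by linarith
  qed (use t in auto)
  then show ?thesis using initial_values by simp
qed

definition "lyap_g2 t = ln (g2 t) + R^3 * w t" for t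

lemma lyap_g2_deriv:
  assumes t: "t \<in> {0..T}"
  shows "(lyap_g2 has_real_derivative - \<rho> t * q_SL (g2 t) (- g1 t) (g3 t) + R^3 * (w_rate t * w t))
    (at t within {0..T})"
  unfolding lyap_g2_def[abs_def] by (rule derivative_eq_intros log_deriv(3) w_deriv t refl | simp)+

lemma lyap_g2_deriv_le:
  assumes t: "t \<in> {0..T}"
  shows "- \<rho> t * q_SL (g2 t) (- g1 t) (g3 t) + R^3 * (w_rate t * w t) \<le> c_growth / (g2 t)^2"
proof -
  note pos = positive[OF t]
  define S where "S = (g1 t)^2*g2 t*g3 t + (g1 t)^3*(g2 t + 3*g3 t) + 3*(g1 t)^4"
  have "- q_SL (g2 t) (- g1 t) (g3 t) - R^3 * g3 t * q_diff_factor (g1 t) (g2 t) (g3 t) * w t \<le> S"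
    unfolding S_def w_def
    by (rule q_SL_neg_second_absorb) (use pos g2_le_g3[OF t] g3_le_R_g2[OF t] R_ge_1 in auto)
  from mult_left_mono[OF this, of "\<rho> t"]
  have "- \<rho> t * q_SL (g2 t) (- g1 t) (g3 t) + R^3 * (w_rate t * w t) \<le> \<rho> t * S"
    using \<rho>_pos[OF t] unfolding w_rate_def by (simp add: algebra_simps)
  also have "\<dots> = S / (6 * (g1 t * g2 t * g3 t)^2)"
    unfolding \<rho>_eq[OF t] by simp
  also have "\<dots> \<le> c_growth / (g2 t)^2" unfolding c_growth_def S_def
    by (rule g2_growth_rate_bound) (use pos g1_le_u_max[OF t] h2_le_g2[OF t] g2_le_g3[OF t] h_pos in auto)
  finally show ?thesis .
qed

lemma g2_sq_upper:
  assumes t: "t \<in> {0..T}"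
  shows "(g2 t)^2 \<le> Y0 + B * t"
proof -
  have exp_lyap: "exp (2 * lyap_g2 x) = (g2 x)^2 * exp (2 * R^3 * w x)" if "x \<in> {0..T}" for x
    using positive[OF that] unfolding lyap_g2_def by (simp add: distrib_left exp_add exp_double mult_ac)
  have "exp (2 * lyap_g2 t) - B * t \<le> exp (2 * lyap_g2 0) - B * 0"
  proof (rule has_real_derivative_nonpos_imp_antimono[of 0 T "\<lambda>x. exp (2 * lyap_g2 x) - B * x"
        "\<lambda>x. exp (2 * lyap_g2 x) * (2 * (- \<rho> x * q_SL (g2 x) (- g1 x) (g3 x) + R^3 * (w_rate x * w x))) - B"])
    fix x assume x: "x \<in> {0..T}"
    show "((\<lambda>x. exp (2 * lyap_g2 x) - B * x) has_real_derivative
        exp (2 * lyap_g2 x) * (2 * (- \<rho> x * q_SL (g2 x) (- g1 x) (g3 x) + R^3 * (w_rate x * w x))) - B)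
        (at x within {0..T})"
      by (rule derivative_eq_intros lyap_g2_deriv x refl | simp)+
    have "exp (2 * lyap_g2 x) * (2 * (- \<rho> x * q_SL (g2 x) (- g1 x) (g3 x) + R^3 * (w_rate x * w x)))
        \<le> exp (2 * lyap_g2 x) * (2 * (c_growth / (g2 x)^2))"
      using lyap_g2_deriv_le[OF x] by (intro mult_left_mono) auto
    also have "\<dots> = 2 * c_growth * exp (2 * R^3 * w x)"
      unfolding exp_lyap[OF x] using positive[OF x] by (simp add: field_simps)
    also have "\<dots> \<le> B"
      unfolding B_def using w_le[OF x] c_growth_pos R_ge_1 by (intro mult_left_mono) auto
    finally show "exp (2 * lyap_g2 x) * (2 * (- \<rho> x * q_SL (g2 x) (- g1 x) (g3 x) + R^3 * (w_rate x * w x)))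
        - B \<le> 0" by simp
  qed (use t in auto)
  moreover have "exp (2 * lyap_g2 0) = Y0"
    using exp_lyap[of 0] t w_initial initial_values(3) by (simp add: Y0_def mult_ac)
  moreover have "(g2 t)^2 \<le> exp (2 * lyap_g2 t)"
    unfolding exp_lyap[OF t] using w_nonneg[OF t] R_ge_1 by (simp add: mult_le_cancel_left1)
  ultimately show ?thesis by linarith
qed

lemma log_growth_deriv_le:
  assumes t: "t \<in> {0..T}"
  shows "1 / (6 * R * (Y0 + B * t)) \<le> 1 / (6 * g2 t * g3 t)"
proof (rule divide_left_mono)
  have "6 * g2 t * g3 t \<le> 6 * R * (g2 t)^2"
    using g3_le_R_g2[OF t] positive[OF t] by (simp add: power2_eq_square)
  also have "\<dots> \<le> 6 * R * (Y0 + B * t)" using g2_sq_upper[OF t] R_ge_1 by simp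
  finally show "6 * g2 t * g3 t \<le> 6 * R * (Y0 + B * t)" .
  show "0 < 6 * R * (Y0 + B * t) * (6 * g2 t * g3 t)"
    using Y0_pos B_pos R_ge_1 positive[OF t] t by (simp add: add_pos_nonneg)
qed simp

lemma g1_decay:
  assumes t: "t \<in> {0..T}"
  shows "ln (g1 t) + log_growth t \<le> ln h1 + (1 + R + R^2) * (R - 1)^2 / 2 + log_growth 0"
proof -
  have "lyap_g1 t + log_growth t \<le> lyap_g1 0 + log_growth 0"
  proof (rule has_real_derivative_nonpos_imp_antimono[of 0 T "\<lambda>x. lyap_g1 x + log_growth x"
        "\<lambda>x. - \<rho> x * q_SL (- g1 x) (g2 x) (g3 x) + (1 + R + R^2) * w x * (w_rate x * w x)
          + 1 / (6 * R * (Y0 + B * x))"])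
    fix x assume x: "x \<in> {0..T}"
    show "((\<lambda>x. lyap_g1 x + log_growth x) has_real_derivative
        - \<rho> x * q_SL (- g1 x) (g2 x) (g3 x) + (1 + R + R^2) * w x * (w_rate x * w x)
          + 1 / (6 * R * (Y0 + B * x))) (at x within {0..T})"
      using x by (intro DERIV_add lyap_g1_deriv log_growth_deriv) auto
    show "- \<rho> x * q_SL (- g1 x) (g2 x) (g3 x) + (1 + R + R^2) * w x * (w_rate x * w x)
          + 1 / (6 * R * (Y0 + B * x)) \<le> 0"
      using lyap_g1_deriv_le[OF x] log_growth_deriv_le[OF x] by simp
  qed (use t in auto)
  moreover have "ln (g1 t) \<le> lyap_g1 t" unfolding lyap_g1_def using R_ge_1 by simp
  moreover have "lyap_g1 0 = ln h1 + (1 + R + R^2) * (R - 1)^2 / 2"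
    unfolding lyap_g1_def using initial_values w_initial by simp
  ultimately show ?thesis by linarith
qed

lemma g0_decay:
  assumes t: "t \<in> {0..T}"
  shows "ln (g0 t) + log_growth t \<le> ln h0 + log_growth 0"
proof -
  have "ln (g0 t) + log_growth t \<le> ln (g0 0) + log_growth 0"
  proof (rule has_real_derivative_nonpos_imp_antimono[of 0 T "\<lambda>x. ln (g0 x) + log_growth x"
        "\<lambda>x. - \<rho> x * p_SL (- g1 x) (g2 x) (g3 x) + 1 / (6 * R * (Y0 + B * x))"])
    fix x assume x: "x \<in> {0..T}"
    show "((\<lambda>x. ln (g0 x) + log_growth x) has_real_derivative
        - \<rho> x * p_SL (- g1 x) (g2 x) (g3 x) + 1 / (6 * R * (Y0 + B * x))) (at x within {0..T})"
      using x by (intro DERIV_add log_deriv log_growth_deriv) auto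
    show "- \<rho> x * p_SL (- g1 x) (g2 x) (g3 x) + 1 / (6 * R * (Y0 + B * x)) \<le> 0"
      using g0_log_deriv_le[OF x] log_growth_deriv_le[OF x] by simp
  qed (use t in auto)
  then show ?thesis using initial_values by simp
qed

lemma w_rate_le:
  assumes t: "t \<in> {0..T}"
  shows "w_rate t \<le> - \<kappa>"
proof -
  note pos = positive[OF t]
  have "0 \<le> 16 * g1 t * (g2 t)^2" using pos by simp
  then have "24 * (g2 t)^3 \<le> q_diff_factor (g1 t) (g2 t) (g3 t)"
    using q_diff_factor_lower_bound[of "g1 t" "g2 t" "g3 t"] pos g2_le_g3[OF t] by linarith
  then have "\<rho> t * g3 t * (24 * (g2 t)^3) \<le> \<rho> t * g3 t * q_diff_factor (g1 t) (g2 t) (g3 t)"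
    using pos \<rho>_pos[OF t] by (intro mult_left_mono) auto
  moreover have "\<rho> t * g3 t * (24 * (g2 t)^3) = 4 * g2 t / ((g1 t)^2 * g3 t)"
    unfolding \<rho>_eq[OF t] using pos by (simp add: field_simps power2_eq_square power3_eq_cube)
  moreover have "\<kappa> \<le> 4 * g2 t / ((g1 t)^2 * g3 t)"
  proof -
    have "(g1 t)^2 * g3 t \<le> u_max^2 * (R * g2 t)"
      using g1_le_u_max[OF t] g3_le_R_g2[OF t] pos by (intro mult_mono power_mono) auto
    then have "4 * g2 t / (u_max^2 * (R * g2 t)) \<le> 4 * g2 t / ((g1 t)^2 * g3 t)"
      using pos u_max_pos R_pos by (intro divide_left_mono mult_pos_pos) auto
    then show ?thesis unfolding \<kappa>_def using pos by simp
  qed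
  ultimately show ?thesis unfolding w_rate_def by linarith
qed

lemma w_decay:
  assumes t: "t \<in> {0..T}"
  shows "w t \<le> (R - 1) * exp (- \<kappa> * t)"
proof -
  have "w t * exp (\<kappa> * t) \<le> w 0 * exp (\<kappa> * 0)"
  proof (rule has_real_derivative_nonpos_imp_antimono[of 0 T "\<lambda>x. w x * exp (\<kappa> * x)"
        "\<lambda>x. (w_rate x + \<kappa>) * w x * exp (\<kappa> * x)"])
    fix x assume x: "x \<in> {0..T}"
    show "((\<lambda>x. w x * exp (\<kappa> * x)) has_real_derivative (w_rate x + \<kappa>) * w x * exp (\<kappa> * x))
        (at x within {0..T})"
      by (rule derivative_eq_intros w_deriv x refl | simp add: algebra_simps)+
    show "(w_rate x + \<kappa>) * w x * exp (\<kappa> * x) \<le> 0"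
      using w_rate_le[OF x] w_nonneg[OF x] by (simp add: mult_nonpos_nonneg)
  qed (use t in auto)
  then show ?thesis using w_initial by (simp add: exp_minus field_simps)
qed

lemma gap_deriv:
  assumes t: "t \<in> {0..T}"
  shows "((\<lambda>x. g3 x - g2 x) has_real_derivative
      g2 t * w t * (- \<rho> t * q_SL (g2 t) (- g1 t) (g3 t) + w_rate t)) (at t within {0..T})"
proof -
  have q3: "q_SL (g3 t) (- g1 t) (g2 t)
      = q_SL (g2 t) (- g1 t) (g3 t) + (g3 t - g2 t) * q_diff_factor (g1 t) (g2 t) (g3 t)"
    using q_SL_neg_second_diff[of "g3 t" "g1 t" "g2 t"] by simp
  have gw: "g2 t * w t = g3 t - g2 t" using positive[OF t] unfolding w_def by (simp add: field_simps)
  have "(- \<rho> t * q_SL (g3 t) (- g1 t) (g2 t)) * g3 t - (- \<rho> t * q_SL (g2 t) (- g1 t) (g3 t)) * g2 t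
      = g2 t * w t * (- \<rho> t * q_SL (g2 t) (- g1 t) (g3 t) + w_rate t)"
    unfolding gw q3 w_rate_def by (simp add: algebra_simps)
  with DERIV_diff[OF SL_deriv(4)[OF t] SL_deriv(3)[OF t]] show ?thesis by simp
qed

lemma gap_deriv_le:
  assumes t: "t \<in> {0..T}" and "R^3 * w t \<le> 1/2" and "c_growth / (g2 t)^2 \<le> \<kappa> / 4"
  shows "g2 t * w t * (- \<rho> t * q_SL (g2 t) (- g1 t) (g3 t) + w_rate t) \<le> - \<kappa> / 4 * (g3 t - g2 t)"
proof -
  have "w_rate t * (1 - R^3 * w t) \<le> w_rate t * (1/2)"
    using assms(2) w_rate_nonpos[OF t] by (intro mult_left_mono_neg) auto
  then have "- \<rho> t * q_SL (g2 t) (- g1 t) (g3 t) + w_rate t \<le> c_growth / (g2 t)^2 + w_rate t / 2"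
    using lyap_g2_deriv_le[OF t] by (simp add: algebra_simps)
  also have "\<dots> \<le> - \<kappa> / 4" using assms(3) w_rate_le[OF t] by linarith
  finally have "g2 t * w t * (- \<rho> t * q_SL (g2 t) (- g1 t) (g3 t) + w_rate t) \<le> g2 t * w t * (- \<kappa> / 4)"
    using positive[OF t] w_nonneg[OF t] by (intro mult_left_mono) auto
  moreover have "g2 t * w t = g3 t - g2 t" using positive[OF t] unfolding w_def by (simp add: field_simps)
  ultimately show ?thesis by (simp add: mult.commute)
qed

lemma gap_decay:
  assumes "0 \<le> T1" "T1 \<le> t" "t \<le> T"
    and small_w: "R^3 * (R - 1) * exp (- \<kappa> * T1) \<le> 1/2" and late: "12 * R * c_growth \<le> \<kappa> * T1"
  shows "g3 t - g2 t \<le> (g3 T1 - g2 T1) * exp (- \<kappa> / 4 * (t - T1))"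
proof -
  define V where "V x = exp (\<kappa> / 4 * x) * (g3 x - g2 x)" for x
  define V' where "V' x = exp (\<kappa> / 4 * x) * (\<kappa> / 4 * (g3 x - g2 x)
    + g2 x * w x * (- \<rho> x * q_SL (g2 x) (- g1 x) (g3 x) + w_rate x))" for x
  have "V t \<le> V T1"
  proof (rule has_real_derivative_nonpos_imp_antimono[of T1 T V V'])
    fix x assume x: "x \<in> {T1..T}"
    then have x0: "x \<in> {0..T}" using assms by auto
    have "(V has_real_derivative V' x) (at x within {0..T})"
      unfolding V_def[abs_def] V'_def
      by (rule derivative_eq_intros gap_deriv x0 refl | simp add: algebra_simps)+
    then show "(V has_real_derivative V' x) (at x within {T1..T})"
      by (rule DERIV_subset) (use assms in auto)
    have "R^3 * w x \<le> R^3 * ((R - 1) * exp (- \<kappa> * x))"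
      using w_decay[OF x0] R_ge_1 by (intro mult_left_mono) auto
    also have "\<dots> \<le> R^3 * (R - 1) * exp (- \<kappa> * T1)"
      using x \<kappa>_pos R_ge_1 by (simp add: mult_left_mono)
    finally have "R^3 * w x \<le> 1/2" using small_w by simp
    moreover have "c_growth / (g2 x)^2 \<le> \<kappa> / 4"
    proof -
      have "4 * c_growth / \<kappa> \<le> T1 / (3 * R)"
        using late \<kappa>_pos R_pos by (simp add: field_simps)
      also have "\<dots> \<le> x / (3 * R)" using x R_pos by (intro divide_right_mono) auto
      also have "\<dots> \<le> (g2 x)^2" using g2_sq_lower[OF x0] zero_le_power2[of h2] by linarith
      finally show ?thesis using positive[OF x0] \<kappa>_pos by (simp add: field_simps)
    qed
    ultimately have "g2 x * w x * (- \<rho> x * q_SL (g2 x) (- g1 x) (g3 x) + w_rate x) \<le> - \<kappa> / 4 * (g3 x - g2 x)"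
      by (rule gap_deriv_le[OF x0])
    then show "V' x \<le> 0" unfolding V'_def by (simp add: mult_nonneg_nonpos)
  qed (use assms in auto)
  have "g3 t - g2 t = exp (- \<kappa> / 4 * t) * V t" unfolding V_def by (simp add: exp_minus)
  also have "\<dots> \<le> exp (- \<kappa> / 4 * t) * V T1" using \<open>V t \<le> V T1\<close> by simp
  also have "\<dots> = (g3 T1 - g2 T1) * exp (- \<kappa> / 4 * (t - T1))"
  proof -
    have "exp (- \<kappa> / 4 * t) * exp (\<kappa> / 4 * T1) = exp (- \<kappa> / 4 * (t - T1))"
      by (simp add: right_diff_distrib flip: exp_add)
    then show ?thesis unfolding V_def by (simp add: mult_ac)
  qed
  finally show ?thesis .
qed

lemma state_in_box:
  assumes t: "t \<in> {0..T}" and "t \<le> T'"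
  shows "(g0 t, g1 t, g2 t, g3 t) \<in> cbox (lower_corner T') (upper_corner T')"
proof -
  note pos = positive[OF t]
  have "B * t \<le> B * T'" using B_pos assms by (intro mult_left_mono) auto
  then have Y: "(g2 t)^2 \<le> Y0 + B * T'" using g2_sq_upper[OF t] by linarith
  then have g2_le: "g2 t \<le> sqrt (Y0 + B * T')" using real_le_rsqrt by blast
  have "g1 t * g2 t * g3 t \<le> u_max * (R * (g2 t)^2)"
    using g1_le_u_max[OF t] g3_le_R_g2[OF t] pos by (auto simp: power2_eq_square intro!: mult_mono)
  also have "\<dots> \<le> u_max * (R * (Y0 + B * T'))" using Y u_max_pos R_pos by (intro mult_left_mono) auto
  finally have "g1 t * g2 t * g3 t \<le> u_max * (R * (Y0 + B * T'))" .
  moreover have "0 < Y0 + B * T'" using Y0_pos B_pos assms by (simp add: add_pos_nonneg)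
  ultimately have "det_h / (u_max * (R * (Y0 + B * T'))) \<le> det_h / (g1 t * g2 t * g3 t)"
    using det_h_pos pos u_max_pos R_pos by (intro divide_left_mono mult_pos_pos) auto
  also have "\<dots> = g0 t" using volume_conserved[OF t] pos by (simp add: field_simps)
  finally have g0_ge: "det_h / (u_max * (R * (Y0 + B * T'))) \<le> g0 t" .
  have "c_decay * t \<le> c_decay * T'" using c_decay_nonneg assms by (intro mult_left_mono) auto
  then have "ln h1 - c_decay * T' \<le> ln (g1 t)" using g1_lower[OF t] by linarith
  then have "exp (ln h1 - c_decay * T') \<le> exp (ln (g1 t))" by simp
  then have "h1 * exp (- c_decay * T') \<le> g1 t" using pos h_pos by (simp add: exp_diff exp_minus divide_inverse)
  moreover have "R * g2 t \<le> R * sqrt (Y0 + B * T')" using g2_le R_pos by simp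
  then have "g3 t \<le> R * sqrt (Y0 + B * T')" using g3_le_R_g2[OF t] by linarith
  ultimately show ?thesis
    unfolding lower_corner_def upper_corner_def
    using g0_ge g0_le_h0[OF t] g1_le_u_max[OF t] h2_le_g2[OF t] g2_le h2_le_g3[OF t]
    by (simp add: cbox_Pair_eq mult.assoc)
qed

end


section \<open>Long-time behaviour of global solutions\<close>

lemma exp_minus_ln_affine_tendsto_0:
  fixes a b k c :: real
  assumes "0 < b" "0 < k"
  shows "((\<lambda>t. exp (c - ln (a + b * t) / k)) \<longlongrightarrow> 0) at_top"
  using assms by real_asymp

context SL_data
begin

lemma tendsto_0_if_log_bound:
  assumes "\<And>t. 0 \<le> t \<Longrightarrow> 0 < f t" and "\<And>t. 0 \<le> t \<Longrightarrow> ln (f t) + log_growth t \<le> c"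
  shows "(f \<longlongrightarrow> 0) at_top"
proof (rule tendsto_sandwich[of "\<lambda>_. 0" f at_top "\<lambda>t. exp (c - log_growth t)"])
  show "\<forall>\<^sub>F t in at_top. 0 \<le> f t"
    using eventually_ge_at_top[of 0] by eventually_elim (use assms(1) in \<open>auto intro: less_imp_le\<close>)
  show "\<forall>\<^sub>F t in at_top. f t \<le> exp (c - log_growth t)"
    using eventually_ge_at_top[of 0]
  proof eventually_elim
    case (elim t)
    then have "exp (ln (f t)) \<le> exp (c - log_growth t)" using assms(2)[of t] by simp
    then show ?case using assms(1)[OF elim] by simp
  qed
  show "((\<lambda>t. exp (c - log_growth t)) \<longlongrightarrow> 0) at_top"
    unfolding log_growth_def
    using exp_minus_ln_affine_tendsto_0[OF B_pos, of "6 * R * B" c Y0] B_pos R_pos by simp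
qed simp

end

locale SL_global = SL_data +
  fixes g0 g1 g2 g3 :: "real \<Rightarrow> real"
  assumes global_solution: "SL_solution h0 h1 h2 h3 g0 g1 g2 g3"
begin

lemma on_interval: "SL_on_interval h0 h1 h2 h3 T g0 g1 g2 g3"
proof
  show "SL_solution_on h0 h1 h2 h3 T g0 g1 g2 g3"
    using global_solution unfolding SL_solution_iff SL_solution_on_iff
    by (auto elim!: has_vector_derivative_within_subset)
qed

lemma positive: "0 \<le> t \<Longrightarrow> 0 < g0 t \<and> 0 < g1 t \<and> 0 < g2 t \<and> 0 < g3 t"
  using SL_on_interval.positive[OF on_interval, of t t] by simp

lemma g0_tendsto_0: "(g0 \<longlongrightarrow> 0) at_top"
proof (rule tendsto_0_if_log_bound)
  show "0 \<le> t \<Longrightarrow> ln (g0 t) + log_growth t \<le> ln h0 + log_growth 0" for t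
    using SL_on_interval.g0_decay[OF on_interval, of t t] by simp
qed (use positive in auto)

lemma g1_tendsto_0: "(g1 \<longlongrightarrow> 0) at_top"
proof (rule tendsto_0_if_log_bound)
  show "0 \<le> t \<Longrightarrow> ln (g1 t) + log_growth t \<le> ln h1 + (1 + R + R^2) * (R - 1)^2 / 2 + log_growth 0" for t
    using SL_on_interval.g1_decay[OF on_interval, of t t] by simp
qed (use positive in auto)

lemma g2_tendsto_infinity: "filterlim g2 at_top at_top"
proof (rule filterlim_at_top_mono)
  show "filterlim (\<lambda>t. sqrt (t / (3 * R))) at_top at_top"
    using R_pos by real_asymp
  show "\<forall>\<^sub>F t in at_top. sqrt (t / (3 * R)) \<le> g2 t"
    using eventually_ge_at_top[of 0]
  proof eventually_elim
    case (elim t)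
    have "h2^2 + t / (3 * R) \<le> (g2 t)^2"
      using SL_on_interval.g2_sq_lower[OF on_interval, of t t] elim by simp
    then have "t / (3 * R) \<le> (g2 t)^2" using zero_le_power2[of h2] by linarith
    then show ?case using positive[OF elim] by (simp add: real_le_lsqrt)
  qed
qed

lemma g3_tendsto_infinity: "filterlim g3 at_top at_top"
proof (rule filterlim_at_top_mono[OF g2_tendsto_infinity])
  show "\<forall>\<^sub>F t in at_top. g2 t \<le> g3 t"
    using eventually_ge_at_top[of 0]
    by eventually_elim (use SL_on_interval.g2_le_g3[OF on_interval] in auto)
qed

lemma gap_tendsto_0: "((\<lambda>t. g3 t - g2 t) \<longlongrightarrow> 0) at_top"
proof -
  have "((\<lambda>T1. R^3 * (R - 1) * exp (- \<kappa> * T1)) \<longlongrightarrow> 0) at_top"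
    using \<kappa>_pos by real_asymp
  then have "\<forall>\<^sub>F T1 in at_top. R^3 * (R - 1) * exp (- \<kappa> * T1) < 1/2"
    by (rule order_tendstoD(2)) simp
  moreover have "\<forall>\<^sub>F T1 in at_top. 0 \<le> T1 \<and> 12 * R * c_growth \<le> \<kappa> * T1"
    using eventually_ge_at_top[of "max 0 (12 * R * c_growth / \<kappa>)"]
    by eventually_elim (use \<kappa>_pos in \<open>auto simp: field_simps\<close>)
  ultimately have "\<forall>\<^sub>F T1 in at_top. 0 \<le> T1 \<and> R^3 * (R - 1) * exp (- \<kappa> * T1) < 1/2 \<and>
      12 * R * c_growth \<le> \<kappa> * T1"
    by eventually_elim auto
  then obtain N where "\<forall>T1\<ge>N. 0 \<le> T1 \<and> R^3 * (R - 1) * exp (- \<kappa> * T1) < 1/2 \<and>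
      12 * R * c_growth \<le> \<kappa> * T1"
    unfolding eventually_at_top_linorder by blast
  then obtain T1 where T1: "0 \<le> T1" "R^3 * (R - 1) * exp (- \<kappa> * T1) < 1/2"
      "12 * R * c_growth \<le> \<kappa> * T1"
    by blast
  show ?thesis
  proof (rule tendsto_sandwich[of "\<lambda>_. 0" _ at_top "\<lambda>t. (g3 T1 - g2 T1) * exp (- \<kappa> / 4 * (t - T1))"])
    show "\<forall>\<^sub>F t in at_top. 0 \<le> g3 t - g2 t"
      using eventually_ge_at_top[of 0]
      by eventually_elim (use SL_on_interval.g2_le_g3[OF on_interval] in auto)
    show "\<forall>\<^sub>F t in at_top. g3 t - g2 t \<le> (g3 T1 - g2 T1) * exp (- \<kappa> / 4 * (t - T1))"
      using eventually_ge_at_top[of T1]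
      by eventually_elim (use SL_on_interval.gap_decay[OF on_interval] T1 in \<open>auto intro: less_imp_le\<close>)
    show "((\<lambda>t. (g3 T1 - g2 T1) * exp (- \<kappa> / 4 * (t - T1))) \<longlongrightarrow> 0) at_top"
      using \<kappa>_pos by real_asymp
  qed simp
qed

end


section \<open>Existence and uniqueness for Lipschitz vector fields\<close>

lemma has_integral_monomial:
  fixes c t :: real
  assumes "0 \<le> t"
  shows "((\<lambda>s. c * s^k) has_integral (c * t^(Suc k) / Suc k)) {0..t}"
proof -
  have "((\<lambda>s. c * s^k) has_integral (c * t^(Suc k) / Suc k - c * 0^(Suc k) / Suc k)) {0..t}"
  proof (rule fundamental_theorem_of_calculus[OF assms])
    fix x assume "x \<in> {0..t}"
    show "((\<lambda>s. c * s^(Suc k) / Suc k) has_vector_derivative c * x^k) (at x within {0..t})"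
      unfolding has_real_derivative_iff_has_vector_derivative[symmetric]
      by (rule derivative_eq_intros refl | simp del: of_nat_Suc)+
  qed
  then show ?thesis by simp
qed

lemma lipschitz_uniform_limit_compose:
  assumes lip: "L-lipschitz_on UNIV F" and lim: "uniform_limit S f g sequentially"
  shows "uniform_limit S (\<lambda>n x. F (f n x)) (\<lambda>x. F (g x)) sequentially"
proof (rule uniform_limitI)
  fix e :: real assume "0 < e"
  have L: "0 \<le> L" using lipschitz_on_nonneg[OF lip] .
  then have "0 < e / (L + 1)" using \<open>0 < e\<close> by simp
  from uniform_limitD[OF lim this] show "\<forall>\<^sub>F n in sequentially. \<forall>x\<in>S. dist (F (f n x)) (F (g x)) < e"
  proof (rule eventually_mono)
    fix n assume n: "\<forall>x\<in>S. dist (f n x) (g x) < e / (L + 1)"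
    show "\<forall>x\<in>S. dist (F (f n x)) (F (g x)) < e"
    proof
      fix x assume "x \<in> S"
      have "dist (F (f n x)) (F (g x)) \<le> L * dist (f n x) (g x)"
        using lipschitz_onD[OF lip] by simp
      also have "\<dots> \<le> L * (e / (L + 1))"
        using n \<open>x \<in> S\<close> L by (intro mult_left_mono) (auto intro: less_imp_le)
      also have "\<dots> < e" using \<open>0 < e\<close> L by (simp add: field_simps)
      finally show "dist (F (f n x)) (F (g x)) < e" .
    qed
  qed
qed

definition picard_iterate :: "'a::banach \<Rightarrow> ('a \<Rightarrow> 'a) \<Rightarrow> nat \<Rightarrow> real \<Rightarrow> 'a" where
  "picard_iterate x0 F n = ((\<lambda>y t. x0 + integral {0..t} (\<lambda>s. F (y s))) ^^ n) (\<lambda>_. x0)"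

lemma picard_iterate_0: "picard_iterate x0 F 0 = (\<lambda>_. x0)"
  unfolding picard_iterate_def by simp

lemma picard_iterate_Suc:
  "picard_iterate x0 F (Suc n) = (\<lambda>t. x0 + integral {0..t} (\<lambda>s. F (picard_iterate x0 F n s)))"
  unfolding picard_iterate_def by simp

lemma picard_iterate_Suc_apply:
  "picard_iterate x0 F (Suc n) t = x0 + integral {0..t} (\<lambda>s. F (picard_iterate x0 F n s))"
  by (simp add: picard_iterate_Suc)

context
  fixes F :: "'a::banach \<Rightarrow> 'a" and L :: real and x0 :: 'a
  assumes lipschitz: "L-lipschitz_on UNIV F"
begin

lemma lipschitz_field_continuous: "continuous_on S F"
  using lipschitz_on_continuous_on[OF lipschitz] continuous_on_subset by blast

lemma picard_iterate_continuous: "continuous_on {0..T} (picard_iterate x0 F n)"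
proof (induction n)
  case 0
  then show ?case by (simp add: picard_iterate_0)
next
  case (Suc n)
  have "continuous_on {0..T} (\<lambda>s. F (picard_iterate x0 F n s))"
    using continuous_on_compose2[OF lipschitz_field_continuous Suc] by blast
  then show ?case unfolding picard_iterate_Suc
    by (intro continuous_intros indefinite_integral_continuous_1 integrable_continuous_real)
qed

lemma picard_iterate_integrable:
  assumes "t \<le> T"
  shows "(\<lambda>s. F (picard_iterate x0 F n s)) integrable_on {0..t}"
proof -
  have "continuous_on {0..T} (\<lambda>s. F (picard_iterate x0 F n s))"
    using continuous_on_compose2[OF lipschitz_field_continuous picard_iterate_continuous] by blast
  then show ?thesis
    using assms by (intro integrable_continuous_real continuous_on_subset[OF \<open>continuous_on {0..T} _\<close>]) auto
qed

lemma picard_iterate_step: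
  assumes "t \<in> {0..T}"
  shows "norm (picard_iterate x0 F (Suc n) t - picard_iterate x0 F n t)
    \<le> norm (F x0) * L^n * t^(Suc n) / fact (Suc n)"
  using assms
proof (induction n arbitrary: t)
  case 0
  then show ?case by (simp add: picard_iterate_Suc picard_iterate_0)
next
  case (Suc n)
  let ?P = "picard_iterate x0 F" and ?c = "L * (norm (F x0) * L^n / fact (Suc n))"
  have t: "0 \<le> t" "t \<le> T" using Suc.prems by auto
  have L: "0 \<le> L" using lipschitz_on_nonneg[OF lipschitz] .
  have "?P (Suc (Suc n)) t - ?P (Suc n) t = integral {0..t} (\<lambda>s. F (?P (Suc n) s) - F (?P n s))"
    unfolding picard_iterate_Suc_apply[of x0 F "Suc n" t] picard_iterate_Suc_apply[of x0 F n t]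
    using integral_diff[OF picard_iterate_integrable[OF order_refl] picard_iterate_integrable[OF order_refl]]
    by simp
  also have "norm \<dots> \<le> integral {0..t} (\<lambda>s. ?c * s^(Suc n))"
  proof (rule integral_norm_bound_integral)
    show "(\<lambda>s. F (?P (Suc n) s) - F (?P n s)) integrable_on {0..t}"
      by (intro integrable_diff picard_iterate_integrable[OF order_refl])
    show "(\<lambda>s. ?c * s^(Suc n)) integrable_on {0..t}"
      using has_integral_monomial[OF t(1)] by blast
    fix s assume s: "s \<in> {0..t}"
    have "norm (F (?P (Suc n) s) - F (?P n s)) \<le> L * norm (?P (Suc n) s - ?P n s)"
      using lipschitz_onD[OF lipschitz] by (simp add: dist_norm)
    also have "\<dots> \<le> L * (norm (F x0) * L^n * s^(Suc n) / fact (Suc n))"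
      using Suc.IH[of s] s t L by (intro mult_left_mono) auto
    finally show "norm (F (?P (Suc n) s) - F (?P n s)) \<le> ?c * s^(Suc n)" by simp
  qed
  also have "\<dots> = ?c * t^(Suc (Suc n)) / Suc (Suc n)"
    using has_integral_monomial[OF t(1)] by (rule integral_unique)
  also have "\<dots> = norm (F x0) * L^(Suc n) * t^(Suc (Suc n)) / fact (Suc (Suc n))"
    by (simp add: field_simps del: of_nat_Suc fact_Suc) (simp add: algebra_simps)
  finally show ?case .
qed

lemma picard_iterate_uniform_limit:
  assumes T: "0 \<le> T"
  obtains X where "uniform_limit {0..T} (picard_iterate x0 F) X sequentially"
proof -
  let ?P = "picard_iterate x0 F"
  define M where "M n = norm (F x0) * L^n * T^(Suc n) / fact (Suc n)" for n
  have L: "0 \<le> L" using lipschitz_on_nonneg[OF lipschitz] .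
  have step: "norm (?P (Suc n) t - ?P n t) \<le> M n" if "t \<in> {0..T}" for n t
  proof -
    have "t^(Suc n) \<le> T^(Suc n)" using that by (intro power_mono) auto
    then have "norm (F x0) * L^n * t^(Suc n) / fact (Suc n) \<le> M n"
      unfolding M_def using L by (intro divide_right_mono mult_left_mono) auto
    then show ?thesis using picard_iterate_step[OF that, of n] by linarith
  qed
  have "summable M"
  proof (rule summable_comparison_test')
    show "summable (\<lambda>n. (norm (F x0) * T) * (inverse (fact n) * (L*T)^n))"
      by (intro summable_mult summable_exp)
    fix n :: nat
    have "M n = (norm (F x0) * T) * ((L*T)^n / fact (Suc n))"
      unfolding M_def by (simp add: power_mult_distrib mult_ac)
    also have "\<dots> \<le> (norm (F x0) * T) * ((L*T)^n / fact n)"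
      using L T by (intro mult_left_mono divide_left_mono) (auto intro: fact_mono)
    also have "\<dots> = (norm (F x0) * T) * (inverse (fact n) * (L*T)^n)" by (simp add: divide_inverse)
    finally have "M n \<le> (norm (F x0) * T) * (inverse (fact n) * (L*T)^n)" .
    moreover have "0 \<le> M n" unfolding M_def using L T by simp
    ultimately show "norm (M n) \<le> (norm (F x0) * T) * (inverse (fact n) * (L*T)^n)" by simp
  qed
  then have "uniform_limit {0..T} (\<lambda>n t. \<Sum>i<n. ?P (Suc i) t - ?P i t) (\<lambda>t. \<Sum>i. ?P (Suc i) t - ?P i t)
      sequentially"
    using step by (intro Weierstrass_m_test_ev) auto
  then have "uniform_limit {0..T} (\<lambda>n t. x0 + (\<Sum>i<n. ?P (Suc i) t - ?P i t))
      (\<lambda>t. x0 + (\<Sum>i. ?P (Suc i) t - ?P i t)) sequentially"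
    by (intro uniform_limit_add uniform_limit_const)
  moreover have "(\<lambda>n t. x0 + (\<Sum>i<n. ?P (Suc i) t - ?P i t)) = ?P"
    by (simp add: fun_eq_iff sum_lessThan_telescope[of "\<lambda>i. picard_iterate x0 F i _"] picard_iterate_0)
  ultimately show ?thesis using that by simp
qed

lemma picard_limit_integral_eq:
  assumes lim: "uniform_limit {0..T} (picard_iterate x0 F) X sequentially" and t: "t \<in> {0..T}"
  shows "X t = x0 + integral {0..t} (\<lambda>s. F (X s))"
proof -
  have "uniform_limit {0..t} (\<lambda>n s. F (picard_iterate x0 F n s)) (\<lambda>s. F (X s)) sequentially"
    by (rule lipschitz_uniform_limit_compose[OF lipschitz uniform_limit_on_subset[OF lim]]) (use t in auto)
  moreover have "continuous_on {0..t} (\<lambda>s. F (picard_iterate x0 F n s))" for n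
    using continuous_on_compose2[OF lipschitz_field_continuous picard_iterate_continuous[of t]] by blast
  ultimately obtain I J where I: "\<And>n. ((\<lambda>s. F (picard_iterate x0 F n s)) has_integral I n) {0..t}"
    and J: "((\<lambda>s. F (X s)) has_integral J) {0..t}" and "I \<longlonglongrightarrow> J"
    by (rule uniform_limit_integral) auto
  then have "(\<lambda>n. picard_iterate x0 F (Suc n) t) \<longlonglongrightarrow> x0 + integral {0..t} (\<lambda>s. F (X s))"
    unfolding picard_iterate_Suc integral_unique[OF I] integral_unique[OF J] by (intro tendsto_intros)
  moreover have "(\<lambda>n. picard_iterate x0 F (Suc n) t) \<longlonglongrightarrow> X t"
    using tendsto_uniform_limitI[OF lim t] by (rule LIMSEQ_Suc)
  ultimately show ?thesis using LIMSEQ_unique by blast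
qed

theorem lipschitz_ode_exists:
  assumes T: "0 \<le> T"
  shows "\<exists>X. X 0 = x0 \<and> (\<forall>t\<in>{0..T}. (X has_vector_derivative F (X t)) (at t within {0..T}))"
proof -
  obtain X where lim: "uniform_limit {0..T} (picard_iterate x0 F) X sequentially"
    using picard_iterate_uniform_limit[OF T] .
  have "continuous_on {0..T} X"
    by (rule uniform_limit_theorem[OF _ lim]) (auto intro: always_eventually picard_iterate_continuous)
  then have FX: "continuous_on {0..T} (\<lambda>s. F (X s))"
    using continuous_on_compose2[OF lipschitz_field_continuous] by blast
  show ?thesis
  proof (intro exI conjI ballI)
    show "X 0 = x0" using picard_limit_integral_eq[OF lim, of 0] T by simp
    fix t assume t: "t \<in> {0..T}"
    have "((\<lambda>t. x0 + integral {0..t} (\<lambda>s. F (X s))) has_vector_derivative F (X t)) (at t within {0..T})"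
      using integral_has_vector_derivative[OF FX t] by (auto intro: derivative_eq_intros)
    then show "(X has_vector_derivative F (X t)) (at t within {0..T})"
      by (rule has_vector_derivative_transform[OF t, rotated]) (use picard_limit_integral_eq[OF lim] in auto)
  qed
qed

end

lemma lipschitz_ode_unique:
  fixes X Y :: "real \<Rightarrow> 'a::real_inner"
  assumes lip: "L-lipschitz_on S F" and init: "X 0 = Y 0"
    and X: "\<And>t. t \<in> {0..T} \<Longrightarrow> (X has_vector_derivative F (X t)) (at t within {0..T})"
      "\<And>t. t \<in> {0..T} \<Longrightarrow> X t \<in> S"
    and Y: "\<And>t. t \<in> {0..T} \<Longrightarrow> (Y has_vector_derivative F (Y t)) (at t within {0..T})"
      "\<And>t. t \<in> {0..T} \<Longrightarrow> Y t \<in> S"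
    and t: "t \<in> {0..T}"
  shows "X t = Y t"
proof -
  define V where "V s = (X s - Y s) \<bullet> (X s - Y s)" for s
  define V' where "V' s = 2 * ((X s - Y s) \<bullet> (F (X s) - F (Y s)))" for s
  have dV: "(V has_real_derivative V' s) (at s within {0..T})" if s: "s \<in> {0..T}" for s
  proof -
    have "((\<lambda>s. X s - Y s) has_vector_derivative F (X s) - F (Y s)) (at s within {0..T})"
      by (intro has_vector_derivative_diff X Y s)
    from bounded_bilinear.has_vector_derivative[OF bounded_bilinear_inner this this]
    show ?thesis
      unfolding V_def V'_def has_real_derivative_iff_has_vector_derivative by (simp add: inner_commute)
  qed
  have V'_le: "V' s \<le> 2 * L * V s" if s: "s \<in> {0..T}" for s
  proof -
    have "(X s - Y s) \<bullet> (F (X s) - F (Y s)) \<le> norm (X s - Y s) * norm (F (X s) - F (Y s))"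
      by (rule norm_cauchy_schwarz)
    also have "\<dots> \<le> norm (X s - Y s) * (L * norm (X s - Y s))"
      using lipschitz_onD[OF lip X(2)[OF s] Y(2)[OF s]] by (intro mult_left_mono) (auto simp: dist_norm)
    also have "\<dots> = L * V s" unfolding V_def by (simp add: power2_norm_eq_inner[symmetric] power2_eq_square)
    finally show ?thesis unfolding V'_def by simp
  qed
  have "V t * exp (- (2 * L) * t) \<le> V 0 * exp (- (2 * L) * 0)"
  proof (rule has_real_derivative_nonpos_imp_antimono[of 0 T "\<lambda>s. V s * exp (- (2 * L) * s)"
        "\<lambda>s. (V' s - 2 * L * V s) * exp (- (2 * L) * s)"])
    fix s assume s: "s \<in> {0..T}"
    show "((\<lambda>s. V s * exp (- (2 * L) * s)) has_real_derivative (V' s - 2 * L * V s) * exp (- (2 * L) * s))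
        (at s within {0..T})"
      by (rule derivative_eq_intros dV s refl | simp add: algebra_simps)+
    show "(V' s - 2 * L * V s) * exp (- (2 * L) * s) \<le> 0"
      using V'_le[OF s] by (simp add: mult_nonpos_nonneg)
  qed (use t in auto)
  then have "V t \<le> 0" using init unfolding V_def by (simp add: mult_le_0_iff)
  then have "(X t - Y t) \<bullet> (X t - Y t) = 0" using inner_ge_zero[of "X t - Y t"] unfolding V_def by linarith
  then show ?thesis by simp
qed

lemma continuous_on_trapped:
  fixes X :: "real \<Rightarrow> 'a::topological_space"
  assumes cont: "continuous_on {0..T} X" and "open U" "closed C" "U \<subseteq> C" "X 0 \<in> U"
    and step: "\<And>\<tau>. \<tau> \<in> {0..T} \<Longrightarrow> X ` {0..\<tau>} \<subseteq> C \<Longrightarrow> X \<tau> \<in> U"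
  shows "X ` {0..T} \<subseteq> U"
proof (rule ccontr)
  assume "\<not> X ` {0..T} \<subseteq> U"
  define A where "A = {0..T} \<inter> X -` (- U)"
  have "A \<noteq> {}" using \<open>\<not> X ` {0..T} \<subseteq> U\<close> unfolding A_def by auto
  moreover have bdd: "bdd_below A" unfolding A_def by (rule bdd_belowI[of _ 0]) auto
  moreover have "closed A"
    unfolding A_def using \<open>open U\<close> by (intro continuous_closed_preimage cont) auto
  ultimately have "Inf A \<in> A" by (rule closed_contains_Inf)
  then have \<tau>: "Inf A \<in> {0..T}" "X (Inf A) \<notin> U" unfolding A_def by auto
  then have "0 < Inf A" using \<open>X 0 \<in> U\<close> by (cases "Inf A = 0") auto
  have "X s \<in> U" if "s \<in> {0..<Inf A}" for s
  proof (rule ccontr)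
    assume "X s \<notin> U"
    then have "s \<in> A" using that \<tau> unfolding A_def by auto
    then show False using cInf_lower[OF _ bdd, of s] that by auto
  qed
  then have "X ` closure {0..<Inf A} \<subseteq> C"
    using \<tau> \<open>0 < Inf A\<close> \<open>U \<subseteq> C\<close> \<open>closed C\<close>
    by (intro image_closure_subset continuous_on_subset[OF cont]) auto
  then have "X (Inf A) \<in> U" using step[OF \<tau>(1)] \<open>0 < Inf A\<close> by simp
  with \<tau> show False by simp
qed


section \<open>Global existence\<close>

definition bounded_lipschitz_on :: "'a::metric_space set \<Rightarrow> ('a \<Rightarrow> real) \<Rightarrow> bool" where
  "bounded_lipschitz_on S f \<longleftrightarrow> (\<exists>L. L-lipschitz_on S f) \<and> (\<exists>M. \<forall>x\<in>S. \<bar>f x\<bar> \<le> M)"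

lemma bounded_lipschitz_on_const: "bounded_lipschitz_on S (\<lambda>_. c)"
  unfolding bounded_lipschitz_on_def by (auto intro: lipschitz_on_constant)

lemma bounded_lipschitz_on_linear:
  assumes "bounded_linear f" and "bounded S"
  shows "bounded_lipschitz_on S f"
proof -
  obtain L where "L-lipschitz_on S f" using bounded_linear.lipschitz_boundE[OF assms(1)] .
  moreover have "bounded (f ` S)" using bounded_linear_image[OF assms(2,1)] .
  then have "\<exists>M. \<forall>x\<in>S. \<bar>f x\<bar> \<le> M" by (auto simp: bounded_iff)
  ultimately show ?thesis unfolding bounded_lipschitz_on_def by blast
qed

lemma bounded_lipschitz_on_add:
  assumes "bounded_lipschitz_on S f" and "bounded_lipschitz_on S g"
  shows "bounded_lipschitz_on S (\<lambda>x. f x + g x)"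
proof -
  from assms obtain Lf Lg Mf Mg where "Lf-lipschitz_on S f" "Lg-lipschitz_on S g"
    and "\<forall>x\<in>S. \<bar>f x\<bar> \<le> Mf" "\<forall>x\<in>S. \<bar>g x\<bar> \<le> Mg"
    unfolding bounded_lipschitz_on_def by blast
  then have "(Lf + Lg)-lipschitz_on S (\<lambda>x. f x + g x)" "\<forall>x\<in>S. \<bar>f x + g x\<bar> \<le> Mf + Mg"
    by (auto intro: lipschitz_on_add abs_triangle_ineq[THEN order_trans] add_mono)
  then show ?thesis unfolding bounded_lipschitz_on_def by blast
qed

lemma bounded_lipschitz_on_minus:
  "bounded_lipschitz_on S f \<Longrightarrow> bounded_lipschitz_on S (\<lambda>x. - f x)"
  unfolding bounded_lipschitz_on_def by (auto intro: lipschitz_on_minus)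

lemma bounded_lipschitz_on_diff:
  "bounded_lipschitz_on S f \<Longrightarrow> bounded_lipschitz_on S g \<Longrightarrow> bounded_lipschitz_on S (\<lambda>x. f x - g x)"
  using bounded_lipschitz_on_add[OF _ bounded_lipschitz_on_minus, of S f g] by simp

lemma bounded_lipschitz_on_mult:
  assumes "bounded_lipschitz_on S f" and "bounded_lipschitz_on S g"
  shows "bounded_lipschitz_on S (\<lambda>x. f x * g x)"
proof -
  from assms obtain Lf Lg Mf Mg where f: "Lf-lipschitz_on S f" "\<And>x. x \<in> S \<Longrightarrow> \<bar>f x\<bar> \<le> \<bar>Mf\<bar>"
    and g: "Lg-lipschitz_on S g" "\<And>x. x \<in> S \<Longrightarrow> \<bar>g x\<bar> \<le> \<bar>Mg\<bar>"
    unfolding bounded_lipschitz_on_def by (meson abs_ge_self order_trans)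
  have L: "0 \<le> Lf" "0 \<le> Lg" using f(1) g(1) by (auto intro: lipschitz_on_nonneg)
  have "(\<bar>Mf\<bar> * Lg + \<bar>Mg\<bar> * Lf)-lipschitz_on S (\<lambda>x. f x * g x)"
  proof (rule lipschitz_onI)
    fix x y assume xy: "x \<in> S" "y \<in> S"
    have "f x * g x - f y * g y = f x * (g x - g y) + g y * (f x - f y)" by (simp add: algebra_simps)
    then have "\<bar>f x * g x - f y * g y\<bar> \<le> \<bar>f x\<bar> * \<bar>g x - g y\<bar> + \<bar>g y\<bar> * \<bar>f x - f y\<bar>"
      by (metis abs_mult abs_triangle_ineq)
    also have "\<dots> \<le> \<bar>Mf\<bar> * (Lg * dist x y) + \<bar>Mg\<bar> * (Lf * dist x y)"
      using lipschitz_onD[OF f(1) xy] lipschitz_onD[OF g(1) xy] f(2) g(2) xy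
      by (intro add_mono mult_mono) (auto simp: dist_real_def)
    finally show "dist (f x * g x) (f y * g y) \<le> (\<bar>Mf\<bar> * Lg + \<bar>Mg\<bar> * Lf) * dist x y"
      by (simp add: dist_real_def algebra_simps)
  qed (use L in simp)
  moreover have "\<forall>x\<in>S. \<bar>f x * g x\<bar> \<le> \<bar>Mf\<bar> * \<bar>Mg\<bar>"
    using f(2) g(2) by (simp add: abs_mult mult_mono)
  ultimately show ?thesis unfolding bounded_lipschitz_on_def by blast
qed

lemma bounded_lipschitz_on_power:
  "bounded_lipschitz_on S f \<Longrightarrow> bounded_lipschitz_on S (\<lambda>x. f x ^ n)"
  by (induction n) (simp_all add: bounded_lipschitz_on_const bounded_lipschitz_on_mult)

lemma SL_field_lipschitz:
  assumes "bounded S"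
  obtains L where "L-lipschitz_on S (SL_field b)"
proof -
  let ?a = "\<lambda>v::real \<times> real \<times> real \<times> real. fst v" and ?u = "\<lambda>v::real \<times> real \<times> real \<times> real. fst (snd v)"
    and ?y = "\<lambda>v::real \<times> real \<times> real \<times> real. fst (snd (snd v))"
    and ?z = "\<lambda>v::real \<times> real \<times> real \<times> real. snd (snd (snd v))"
  have coords: "bounded_lipschitz_on S ?a" "bounded_lipschitz_on S ?u"
      "bounded_lipschitz_on S ?y" "bounded_lipschitz_on S ?z"
    using assms by (auto intro!: bounded_lipschitz_on_linear bounded_linear_fst bounded_linear_snd
        bounded_linear_compose[of fst] bounded_linear_compose[of snd])
  have "bounded_lipschitz_on S (\<lambda>v. - b * p_SL (- ?u v) (?y v) (?z v) * (?a v)^3)"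
      "bounded_lipschitz_on S (\<lambda>v. - b * q_SL (- ?u v) (?y v) (?z v) * (?a v)^2 * ?u v)"
      "bounded_lipschitz_on S (\<lambda>v. - b * q_SL (?y v) (- ?u v) (?z v) * (?a v)^2 * ?y v)"
      "bounded_lipschitz_on S (\<lambda>v. - b * q_SL (?z v) (- ?u v) (?y v) * (?a v)^2 * ?z v)"
    unfolding p_SL_def q_SL_def
    by (intro bounded_lipschitz_on_mult bounded_lipschitz_on_add bounded_lipschitz_on_diff
        bounded_lipschitz_on_minus bounded_lipschitz_on_power bounded_lipschitz_on_const coords)+
  then obtain L0 L1 L2 L3 where
      "L0-lipschitz_on S (\<lambda>v. - b * p_SL (- ?u v) (?y v) (?z v) * (?a v)^3)"
      "L1-lipschitz_on S (\<lambda>v. - b * q_SL (- ?u v) (?y v) (?z v) * (?a v)^2 * ?u v)"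
      "L2-lipschitz_on S (\<lambda>v. - b * q_SL (?y v) (- ?u v) (?z v) * (?a v)^2 * ?y v)"
      "L3-lipschitz_on S (\<lambda>v. - b * q_SL (?z v) (- ?u v) (?y v) * (?a v)^2 * ?z v)"
    unfolding bounded_lipschitz_on_def by blast
  note pair = lipschitz_on_Pair[OF this(1) lipschitz_on_Pair[OF this(2) lipschitz_on_Pair[OF this(3,4)]]]
  have "SL_field b = (\<lambda>v. (- b * p_SL (- ?u v) (?y v) (?z v) * (?a v)^3,
      - b * q_SL (- ?u v) (?y v) (?z v) * (?a v)^2 * ?u v, - b * q_SL (?y v) (- ?u v) (?z v) * (?a v)^2 * ?y v,
      - b * q_SL (?z v) (- ?u v) (?y v) * (?a v)^2 * ?z v))"
    by (simp add: SL_field_def fun_eq_iff split_beta)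
  with pair have "\<exists>L. L-lipschitz_on S (SL_field b)" by auto
  then show ?thesis using that by blast
qed

lemma SL_field_solution_unique:
  assumes "X 0 = Y 0"
    and X: "\<And>t. t \<in> {0..T} \<Longrightarrow> (X has_vector_derivative SL_field b (X t)) (at t within {0..T})"
    and Y: "\<And>t. t \<in> {0..T} \<Longrightarrow> (Y has_vector_derivative SL_field b (Y t)) (at t within {0..T})"
    and "t \<in> {0..T}"
  shows "X t = Y t"
proof -
  have "compact (X ` {0..T})" "compact (Y ` {0..T})"
    by (rule compact_continuous_image[OF continuous_on_vector_derivative compact_Icc], fact)+
  then have "bounded (X ` {0..T} \<union> Y ` {0..T})"
    by (intro compact_imp_bounded compact_Un)
  then obtain L where "L-lipschitz_on (X ` {0..T} \<union> Y ` {0..T}) (SL_field b)"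
    by (rule SL_field_lipschitz)
  from lipschitz_ode_unique[OF this, of X Y T] show ?thesis
    using assms by auto
qed

lemma (in SL_data) vector_solution_in_box:
  assumes X0: "X 0 = (h0, h1, h2, h3)"
    and X: "\<And>t. t \<in> {0..\<tau>} \<Longrightarrow> (X has_vector_derivative SL_field \<beta> (X t)) (at t within {0..\<tau>})"
    and "0 \<le> \<tau>" "\<tau> \<le> T"
  shows "X \<tau> \<in> cbox (lower_corner T) (upper_corner T)"
proof -
  have "SL_solution_on h0 h1 h2 h3 \<tau> (\<lambda>t. fst (X t)) (\<lambda>t. fst (snd (X t)))
      (\<lambda>t. fst (snd (snd (X t)))) (\<lambda>t. snd (snd (snd (X t))))"
    unfolding SL_solution_on_iff using X0 X by (simp add: \<beta>_def)
  then interpret I: SL_on_interval h0 h1 h2 h3 \<tau> "\<lambda>t. fst (X t)" "\<lambda>t. fst (snd (X t))"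
      "\<lambda>t. fst (snd (snd (X t)))" "\<lambda>t. snd (snd (snd (X t)))"
    by (intro SL_on_interval.intro SL_data_axioms SL_on_interval_axioms.intro)
  show ?thesis using I.state_in_box[of \<tau> T] assms by simp
qed

text \<open>
  Existence on \<open>[0, T]\<close>: the field is clamped to a box \<open>C\<close> around the a priori box, which makes it
  globally Lipschitz; the a priori box lies in the interior of \<open>C\<close>, so the solution of the clamped
  equation never reaches the region where the clamping is active.\<close>

lemma (in SL_data) solution_on_exists:
  assumes T: "0 \<le> T"
  shows "\<exists>X. X 0 = (h0, h1, h2, h3) \<and>
    (\<forall>t\<in>{0..T}. (X has_vector_derivative SL_field \<beta> (X t)) (at t within {0..T}))"
proof -
  obtain l0 l1 l2 l3 u0 u1 u2 u3 where
      corners: "lower_corner T = (l0, l1, l2, l3)" "upper_corner T = (u0, u1, u2, u3)"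
    by (metis prod.exhaust)
  define lo where "lo = (min l0 h0 - 1, min l1 h1 - 1, min l2 h2 - 1, min l3 h3 - 1)"
  define hi where "hi = (max u0 h0 + 1, max u1 h1 + 1, max u2 h2 + 1, max u3 h3 + 1)"
  define U where "U = {min l0 h0 - 1<..<max u0 h0 + 1} \<times> {min l1 h1 - 1<..<max u1 h1 + 1}
    \<times> {min l2 h2 - 1<..<max u2 h2 + 1} \<times> {min l3 h3 - 1<..<max u3 h3 + 1}"
  have "open U" unfolding U_def by (intro open_Times open_greaterThanLessThan)
  have U_sub: "U \<subseteq> cbox lo hi"
    unfolding U_def lo_def hi_def cbox_Pair_eq cbox_interval by (intro Sigma_mono subsetI) auto
  have h_in_U: "(h0, h1, h2, h3) \<in> U" unfolding U_def by auto
  have box_sub: "cbox (lower_corner T) (upper_corner T) \<subseteq> U"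
    unfolding U_def corners cbox_Pair_eq cbox_interval by (intro Sigma_mono subsetI) auto
  have Basis: "lo \<bullet> i \<le> hi \<bullet> i" if "i \<in> Basis" for i
    using box_ne_empty(1)[of lo hi] h_in_U U_sub that by blast
  obtain L where L: "L-lipschitz_on (cbox lo hi) (SL_field \<beta>)"
    using SL_field_lipschitz[OF bounded_cbox] .
  have clamp_lipschitz: "1-lipschitz_on UNIV (clamp lo hi)"
    by (rule lipschitz_onI) (simp_all add: dist_clamps_le_dist_args)
  have "clamp lo hi ` UNIV \<subseteq> cbox lo hi" using Basis by (auto intro!: clamp_in_interval)
  from lipschitz_on_compose2[OF clamp_lipschitz lipschitz_on_subset[OF L this]]
  have "(L * 1)-lipschitz_on UNIV (\<lambda>v. SL_field \<beta> (clamp lo hi v))" .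
  from lipschitz_ode_exists[OF this T, of "(h0, h1, h2, h3)"] obtain X where X0: "X 0 = (h0, h1, h2, h3)"
    and X': "\<And>t. t \<in> {0..T} \<Longrightarrow> (X has_vector_derivative SL_field \<beta> (clamp lo hi (X t))) (at t within {0..T})"
    by blast
  have unclamped: "(X has_vector_derivative SL_field \<beta> (X t)) (at t within {0..T})"
    if "X t \<in> cbox lo hi" "t \<in> {0..T}" for t
    using X'[OF that(2)] that(1) by simp
  have "X ` {0..T} \<subseteq> U"
  proof (rule continuous_on_trapped[OF _ \<open>open U\<close> closed_cbox U_sub])
    show "continuous_on {0..T} X" using X' by (rule continuous_on_vector_derivative)
    show "X 0 \<in> U" using X0 h_in_U by simp
    fix \<tau> assume \<tau>: "\<tau> \<in> {0..T}" and "X ` {0..\<tau>} \<subseteq> cbox lo hi"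
    then have "(X has_vector_derivative SL_field \<beta> (X t)) (at t within {0..\<tau>})" if "t \<in> {0..\<tau>}" for t
      using that by (intro has_vector_derivative_within_subset[OF unclamped]) auto
    from vector_solution_in_box[OF X0 this, of T] show "X \<tau> \<in> U" using \<tau> box_sub by auto
  qed
  then show ?thesis using X0 unclamped U_sub by blast
qed

lemma (in SL_data) solution_exists: "\<exists>g0 g1 g2 g3. SL_solution h0 h1 h2 h3 g0 g1 g2 g3"
proof -
  let ?F = "SL_field \<beta>"
  have "\<forall>n::nat. \<exists>Y. Y 0 = (h0, h1, h2, h3) \<and>
      (\<forall>t\<in>{0..real n}. (Y has_vector_derivative ?F (Y t)) (at t within {0..real n}))"
    using solution_on_exists by simp
  from choice[OF this] obtain X where X: "\<forall>n::nat. X n 0 = (h0, h1, h2, h3) \<and>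
      (\<forall>t\<in>{0..real n}. (X n has_vector_derivative ?F (X n t)) (at t within {0..real n}))"
    by blast
  then have X0: "\<And>n. X n 0 = (h0, h1, h2, h3)"
    and X': "\<And>n t. t \<in> {0..real n} \<Longrightarrow> (X n has_vector_derivative ?F (X n t)) (at t within {0..real n})"
    by blast+
  have agree: "X m t = X n t" if "0 \<le> t" "t \<le> real m" "t \<le> real n" for m n t
  proof (rule SL_field_solution_unique[of "X m" "X n" "min (real m) (real n)"])
    show "X m 0 = X n 0" using X0 by simp
    show "t \<in> {0..min (real m) (real n)}" using that by simp
    fix s assume s: "s \<in> {0..min (real m) (real n)}"
    show "(X m has_vector_derivative ?F (X m s)) (at s within {0..min (real m) (real n)})"
      by (rule has_vector_derivative_within_subset[OF X'[of s m]]) (use s in auto)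
    show "(X n has_vector_derivative ?F (X n s)) (at s within {0..min (real m) (real n)})"
      by (rule has_vector_derivative_within_subset[OF X'[of s n]]) (use s in auto)
  qed
  define G where "G t = X (Suc (nat \<lceil>t\<rceil>)) t" for t
  have G_eq: "G s = X n s" if "0 \<le> s" "s \<le> real n" for s n
    unfolding G_def using that by (intro agree) linarith+
  have "(G has_vector_derivative ?F (G t)) (at t within {0..})" if "0 \<le> t" for t
  proof -
    define n where "n = Suc (nat \<lceil>t\<rceil>)"
    have "t < real n" unfolding n_def by linarith
    have "(G has_vector_derivative ?F (G t)) (at t within {0..real n})"
      using X'[of t n] G_eq[of _ n] that \<open>t < real n\<close>
      by (intro has_vector_derivative_transform[of t "{0..real n}" G "X n"]) auto
    moreover have "at t within {0..real n} = at t within {0..}"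
      by (rule at_within_nhd[of t "{..<real n}"]) (use \<open>t < real n\<close> in auto)
    ultimately show ?thesis by simp
  qed
  then have "SL_solution h0 h1 h2 h3 (\<lambda>t. fst (G t)) (\<lambda>t. fst (snd (G t)))
      (\<lambda>t. fst (snd (snd (G t)))) (\<lambda>t. snd (snd (snd (G t))))"
    unfolding SL_solution_iff using G_eq[of 0 0] X0 by (simp add: \<beta>_def)
  then show ?thesis by blast
qed


definition SL_global_behaviour :: "real \<Rightarrow> real \<Rightarrow> real \<Rightarrow> real \<Rightarrow> bool" where
  "SL_global_behaviour h0 h1 h2 h3 \<longleftrightarrow>
    (\<exists>g0 g1 g2 g3. SL_solution h0 h1 h2 h3 g0 g1 g2 g3) \<and>
    (\<forall>g0 g1 g2 g3. SL_solution h0 h1 h2 h3 g0 g1 g2 g3 \<longrightarrow>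
      (g0 \<longlongrightarrow> 0) at_top \<and> (g1 \<longlongrightarrow> 0) at_top \<and>
      filterlim g2 at_top at_top \<and> filterlim g3 at_top at_top \<and>
      ((\<lambda>t. g3 t - g2 t) \<longlongrightarrow> 0) at_top)"

lemma (in SL_data) global_behaviour: "SL_global_behaviour h0 h1 h2 h3"
  unfolding SL_global_behaviour_def
proof (intro conjI allI impI solution_exists)
  fix g0 g1 g2 g3 assume "SL_solution h0 h1 h2 h3 g0 g1 g2 g3"
  then interpret SL_global h0 h1 h2 h3 g0 g1 g2 g3
    by (intro SL_global.intro SL_data_axioms SL_global_axioms.intro)
  show "(g0 \<longlongrightarrow> 0) at_top" "(g1 \<longlongrightarrow> 0) at_top" "filterlim g2 at_top at_top"
    "filterlim g3 at_top at_top" "((\<lambda>t. g3 t - g2 t) \<longlongrightarrow> 0) at_top"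
    by (fact g0_tendsto_0 g1_tendsto_0 g2_tendsto_infinity g3_tendsto_infinity gap_tendsto_0)+
qed

lemma SL_solution_swap: "SL_solution h0 h1 h2 h3 g0 g1 g2 g3 \<longleftrightarrow> SL_solution h0 h1 h3 h2 g0 g1 g3 g2"
proof -
  have \<beta>: "beta_SL h0 h1 h3 h2 = beta_SL h0 h1 h2 h3" unfolding beta_SL_def by (simp add: mult_ac)
  show ?thesis unfolding SL_solution_def \<beta> p_SL_swap[of "- g1 _" "g3 _" "g2 _"]
      q_SL_swap[of "- g1 _" "g3 _" "g2 _"] q_SL_swap[of "g2 _" "- g1 _" "g3 _"] q_SL_swap[of "g3 _" "- g1 _" "g2 _"]
    by blast
qed

lemma SL_global_behaviour_swap:
  assumes "SL_global_behaviour h0 h1 h3 h2"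
  shows "SL_global_behaviour h0 h1 h2 h3"
  unfolding SL_global_behaviour_def
proof (intro conjI allI impI)
  from assms obtain g0 g1 g2 g3 where "SL_solution h0 h1 h3 h2 g0 g1 g2 g3"
    unfolding SL_global_behaviour_def by blast
  then show "\<exists>g0 g1 g2 g3. SL_solution h0 h1 h2 h3 g0 g1 g2 g3"
    using SL_solution_swap[of h0 h1 h2 h3 g0 g1 g3 g2] by auto
  fix g0 g1 g2 g3 assume "SL_solution h0 h1 h2 h3 g0 g1 g2 g3"
  then have "SL_solution h0 h1 h3 h2 g0 g1 g3 g2" using SL_solution_swap[of h0 h1 h2 h3 g0 g1 g2 g3] by simp
  with assms have lim: "(g0 \<longlongrightarrow> 0) at_top" "(g1 \<longlongrightarrow> 0) at_top" "filterlim g3 at_top at_top"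
      "filterlim g2 at_top at_top" "((\<lambda>t. g2 t - g3 t) \<longlongrightarrow> 0) at_top"
    unfolding SL_global_behaviour_def by blast+
  then show "(g0 \<longlongrightarrow> 0) at_top" "(g1 \<longlongrightarrow> 0) at_top" "filterlim g2 at_top at_top"
    "filterlim g3 at_top at_top" by simp_all
  show "((\<lambda>t. g3 t - g2 t) \<longlongrightarrow> 0) at_top" using tendsto_minus[OF lim(5)] by simp
qed

theorem theorem5p8:
  fixes h0 h1 h2 h3 :: real
  assumes "h0 > 0" and "h1 > 0" and "h2 > 0" and "h3 > 0"
  shows "(\<exists>g0 g1 g2 g3. SL_solution h0 h1 h2 h3 g0 g1 g2 g3) \<and>
         (\<forall>g0 g1 g2 g3. SL_solution h0 h1 h2 h3 g0 g1 g2 g3 \<longrightarrow>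
            (g0 \<longlongrightarrow> 0) at_top \<and> (g1 \<longlongrightarrow> 0) at_top \<and>
            filterlim g2 at_top at_top \<and> filterlim g3 at_top at_top \<and>
            ((\<lambda>t. g3 t - g2 t) \<longlongrightarrow> 0) at_top)"
proof -
  have "SL_global_behaviour h0 h1 h2 h3"
  proof (cases "h2 \<le> h3")
    case True
    with assms show ?thesis by (intro SL_data.global_behaviour) (simp add: SL_data_def)
  next
    case False
    with assms show ?thesis
      by (intro SL_global_behaviour_swap[OF SL_data.global_behaviour]) (simp add: SL_data_def)
  qed
  then show ?thesis unfolding SL_global_behaviour_def .
qed

end
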